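(* Let $\{\varphi_n\},\{\psi_n\}$ be biorthogonal sequences in a Hilbert space $\mathcal H$ forming a $(\mathcal D,\mathcal E)$-quasi basis for dense subspaces $\mathcal D,\mathcal E$ with $D_\psi\subseteq\mathcal D\subseteq D(\varphi)$, $D_\varphi\subseteq\mathcal E\subseteq D(\psi)$. Then there exists an ONB $\{f_n\}$ of $\mathcal H$ such that $\overline{T_{f,\varphi}|_{\mathcal D}}$ is a positive self-adjoint operator and $(\{f_n\},\overline{T_{f,\varphi}|_{\mathcal D}})$ is a constructing pair for the generalized Riesz system $\{\varphi_n\}$. Furthermore, $(\{f_n\},(\overline{T_{f,\varphi}|_{\mathcal D}})^{-1})$ is a constructing pair for the generalized Riesz system $\{\psi_n\}$.
   Context: Inner product linear in the first argument. Biorthogonal: $\langle\varphi_n,\psi_m\rangle=\delta_{nm}$. $D_\varphi,D_\psi$ are the linear spans; $D(\varphi)=\{x:\sum_n|\langle x,\varphi_n\rangle|^2<\infty\}$, similarly $D(\psi)$. The pair is a $(\mathcal D,\mathcal E)$-quasi basis if $\sum_k\langle x,\varphi_k\rangle\langle\psi_k,y\rangle=\langle x,y\rangle$ for all $x\in\mathcal D$, $y\in\mathcal E$. For an ONB $\{f_n\}$, $T_{f,\varphi}$ is the operator with domain $D(\varphi)$, $T_{f,\varphi}x=\sum_n\langle x,\varphi_n\rangle f_n$; bar denotes closure and $|_{\mathcal D}$ restriction. A constructing pair for a sequence $\{\chi_n\}$ is a pair $(\{f_n\},S)$ with $\{f_n\}$ an ONB and $S$ a densely defined closed operator with densely defined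 inverse such that $f_n\in D(S)\cap D((S^{-1})^* )$ and $Sf_n=\chi_n$ for all $n$; a sequence admitting one is a generalized Riesz system. *)

theory Defs
  imports "HOL-Analysis.Analysis"
begin

class complex_vector = real_vector +
  fixes scaleC :: "complex \<Rightarrow> 'a \<Rightarrow> 'a"  (infixr \<open>*\<^sub>C\<close> 75)
  assumes scaleC_add_right: "a *\<^sub>C (x + y) = a *\<^sub>C x + a *\<^sub>C y"
    and scaleC_add_left: "(a + b) *\<^sub>C x = a *\<^sub>C x + b *\<^sub>C x"
    and scaleC_scaleC: "a *\<^sub>C (b *\<^sub>C x) = (a * b) *\<^sub>C x"
    and scaleC_one: "1 *\<^sub>C x = x"
    and scaleR_scaleC: "scaleR r x = complex_of_real r *\<^sub>C x"

class complex_normed_vector = complex_vector + real_normed_vector +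
  assumes norm_scaleC: "norm (a *\<^sub>C x) = cmod a * norm x"

class complex_inner = complex_normed_vector +
  fixes cinner :: "'a \<Rightarrow> 'a \<Rightarrow> complex"
  assumes cinner_add_left: "cinner (x + y) z = cinner x z + cinner y z"
    and cinner_scaleC_left: "cinner (a *\<^sub>C x) y = a * cinner x y"
    and cinner_commute: "cinner y x = cnj (cinner x y)"
    and cinner_ge_zero: "0 \<le> Re (cinner x x)"
    and cinner_eq_zero_iff: "cinner x x = 0 \<longleftrightarrow> x = 0"
    and norm_eq_sqrt_cinner: "norm x = sqrt (Re (cinner x x))"

class chilbert_space = complex_inner + complete_space

definition csubspace :: "'a::complex_vector set \<Rightarrow> bool" where
  "csubspace S \<longleftrightarrow> 0 \<in> S \<and> (\<forall>x\<in>S. \<forall>y\<in>S. x + y \<in> S) \<and> (\<forall>c. \<forall>x\<in>S. c *\<^sub>C x \<in> S)"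

definition cspan :: "'a::complex_vector set \<Rightarrow> 'a set" where
  "cspan B = {\<Sum>b\<in>F. c b *\<^sub>C b | F c. finite F \<and> F \<subseteq> B}"

definition dense_set :: "'a::topological_space set \<Rightarrow> bool" where
  "dense_set S \<longleftrightarrow> closure S = UNIV"

definition orthonormal_basis :: "(nat \<Rightarrow> 'a::complex_inner) \<Rightarrow> bool" where
  "orthonormal_basis f \<longleftrightarrow>
     (\<forall>n m. cinner (f n) (f m) = (if n = m then 1 else 0)) \<and> dense_set (cspan (range f))"

definition biorthogonal :: "(nat \<Rightarrow> 'a::complex_inner) \<Rightarrow> (nat \<Rightarrow> 'a) \<Rightarrow> bool" where
  "biorthogonal \<phi> \<psi> \<longleftrightarrow> (\<forall>n m. cinner (\<phi> n) (\<psi> m) = (if n = m then 1 else 0))"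

definition seq_domain :: "(nat \<Rightarrow> 'a::complex_inner) \<Rightarrow> 'a set" where
  "seq_domain \<phi> = {x. summable (\<lambda>n. (cmod (cinner x (\<phi> n)))\<^sup>2)}"

definition quasi_basis :: "(nat \<Rightarrow> 'a::complex_inner) \<Rightarrow> (nat \<Rightarrow> 'a) \<Rightarrow> 'a set \<Rightarrow> 'a set \<Rightarrow> bool" where
  "quasi_basis \<phi> \<psi> D E \<longleftrightarrow>
     (\<forall>x\<in>D. \<forall>y\<in>E. (\<lambda>k. cinner x (\<phi> k) * cinner (\<psi> k) y) sums cinner x y)"

section \<open>(Unbounded) linear operators, represented by their graphs\<close>

type_synonym 'a lop = "('a \<times> 'a) set"

definition op_dom :: "'a lop \<Rightarrow> 'a set" where
  "op_dom T = fst ` T"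

definition op_range :: "'a lop \<Rightarrow> 'a set" where
  "op_range T = snd ` T"

definition is_operator :: "'a::complex_vector lop \<Rightarrow> bool" where
  "is_operator T \<longleftrightarrow>
     (0, 0) \<in> T \<and>
     (\<forall>x y u v. (x, y) \<in> T \<longrightarrow> (u, v) \<in> T \<longrightarrow> (x + u, y + v) \<in> T) \<and>
     (\<forall>c x y. (x, y) \<in> T \<longrightarrow> (c *\<^sub>C x, c *\<^sub>C y) \<in> T) \<and>
     (\<forall>y. (0, y) \<in> T \<longrightarrow> y = 0)"

definition op_inverse :: "'a lop \<Rightarrow> 'a lop" where
  "op_inverse T = {(y, x). (x, y) \<in> T}"

definition op_restrict :: "'a lop \<Rightarrow> 'a set \<Rightarrow> 'a lop" where
  "op_restrict T D = {(x, y). (x, y) \<in> T \<and> x \<in> D}"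

definition op_closure :: "'a::topological_space lop \<Rightarrow> 'a lop" where
  "op_closure T = closure T"

definition adjoint :: "'a::complex_inner lop \<Rightarrow> 'a lop" where
  "adjoint T = {(y, z). \<forall>x w. (x, w) \<in> T \<longrightarrow> cinner w y = cinner x z}"

definition densely_defined :: "'a::complex_inner lop \<Rightarrow> bool" where
  "densely_defined T \<longleftrightarrow> dense_set (op_dom T)"

definition closed_operator :: "'a::complex_inner lop \<Rightarrow> bool" where
  "closed_operator T \<longleftrightarrow> is_operator T \<and> closed T"

definition self_adjoint :: "'a::complex_inner lop \<Rightarrow> bool" where
  "self_adjoint T \<longleftrightarrow> is_operator T \<and> densely_defined T \<and> adjoint T = T"

definition positive_op :: "'a::complex_inner lop \<Rightarrow> bool" where
  "positive_op T \<longleftrightarrow> (\<forall>x y. (x, y) \<in> T \<longrightarrow> Im (cinner y x) = 0 \<and> 0 \<le> Re (cinner y x))"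

definition T_op :: "(nat \<Rightarrow> 'a::complex_inner) \<Rightarrow> (nat \<Rightarrow> 'a) \<Rightarrow> 'a lop" where
  "T_op f \<phi> = {(x, y). x \<in> seq_domain \<phi> \<and> (\<lambda>n. cinner x (\<phi> n) *\<^sub>C f n) sums y}"

definition constructing_pair :: "(nat \<Rightarrow> 'a::complex_inner) \<Rightarrow> (nat \<Rightarrow> 'a) \<Rightarrow> 'a lop \<Rightarrow> bool" where
  "constructing_pair chi f S \<longleftrightarrow>
     orthonormal_basis f \<and>
     closed_operator S \<and> densely_defined S \<and>
     is_operator (op_inverse S) \<and> densely_defined (op_inverse S) \<and>
     (\<forall>n. f n \<in> op_dom S \<inter> op_dom (adjoint (op_inverse S)) \<and> (f n, chi n) \<in> S)"

definition generalized_riesz_system :: "(nat \<Rightarrow> 'a::complex_inner) \<Rightarrow> bool" where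
  "generalized_riesz_system chi \<longleftrightarrow> (\<exists>f S. constructing_pair chi f S)"

end

theory Submission
  imports Defs "HOL-Computational_Algebra.Polynomial"
begin

text \<open>Let \<open>e\<close> be any orthonormal sequence (Gram-Schmidt applied to \<open>\<psi>\<close>) and let \<open>A\<close> be the closure
  of \<open>T\<^sub>e\<^sub>,\<^sub>\<phi>\<close> restricted to \<open>D\<close>; the quasi-basis property makes \<open>A\<close> injective. By von Neumann's
  construction \<open>A\<close> has a modulus \<open>S = \<bar>A\<bar>\<close>: a positive self-adjoint operator with the same domain and
  \<open>\<parallel>S x\<parallel> = \<parallel>A x\<parallel>\<close>, hence \<open>\<langle>S x, S y\<rangle> = \<langle>A x, A y\<rangle>\<close> by polarization. Put \<open>f\<^sub>n = S \<psi>\<^sub>n\<close>. Since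
  \<open>A \<psi>\<^sub>n = e\<^sub>n\<close>, the \<open>f\<^sub>n\<close> are orthonormal and \<open>\<langle>S x, f\<^sub>n\<rangle> = \<langle>x, \<phi>\<^sub>n\<rangle>\<close>. So \<open>S = T\<^sub>f\<^sub>,\<^sub>\<phi>\<close> on \<open>D\<close>,
  which is a core for \<open>S\<close>, and \<open>S f\<^sub>n = S\<^sup>* f\<^sub>n = \<phi>\<^sub>n\<close>; completeness of \<open>f\<close> follows from the
  injectivity of \<open>S\<^sup>* = S\<close>.\<close>

section \<open>Complex inner product spaces\<close>

instance chilbert_space \<subseteq> banach ..

context complex_vector
begin

lemma scaleC_zero_left [simp]: "0 *\<^sub>C x = 0"
proof -
  have "0 *\<^sub>C x = 0 *\<^sub>C x + 0 *\<^sub>C x" using scaleC_add_left[of 0 0 x] by simp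
  then show ?thesis by simp
qed

lemma scaleC_zero_right [simp]: "a *\<^sub>C 0 = 0"
proof -
  have "a *\<^sub>C 0 = a *\<^sub>C 0 + a *\<^sub>C 0" using scaleC_add_right[of a 0 0] by simp
  then show ?thesis by simp
qed

lemma scaleC_minus_right: "a *\<^sub>C (- x) = - (a *\<^sub>C x)"
proof -
  have "a *\<^sub>C (- x) + a *\<^sub>C x = 0" by (simp flip: scaleC_add_right)
  then show ?thesis by (simp add: eq_neg_iff_add_eq_0)
qed

lemma scaleC_minus_left: "(- a) *\<^sub>C x = - (a *\<^sub>C x)"
proof -
  have "(- a) *\<^sub>C x + a *\<^sub>C x = 0" by (simp flip: scaleC_add_left)
  then show ?thesis by (simp add: eq_neg_iff_add_eq_0)
qed

lemma scaleC_diff_right: "a *\<^sub>C (x - y) = a *\<^sub>C x - a *\<^sub>C y"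
  using scaleC_add_right[of a x "- y"] by (simp add: scaleC_minus_right)

lemma scaleC_sum_right: "a *\<^sub>C (\<Sum>i\<in>A. f i) = (\<Sum>i\<in>A. a *\<^sub>C f i)"
  by (induction A rule: infinite_finite_induct) (auto simp: scaleC_add_right)

declare scaleC_one [simp] scaleC_scaleC [simp]

end

context complex_inner
begin

lemma cinner_zero_left [simp]: "cinner 0 y = 0"
  using cinner_add_left[of 0 0 y] by simp

lemma cinner_add_right: "cinner x (y + z) = cinner x y + cinner x z"
  by (metis cinner_add_left cinner_commute complex_cnj_add)

lemma cinner_zero_right [simp]: "cinner x 0 = 0"
  using cinner_add_right[of x 0 0] by simp

lemma cinner_scaleC_right: "cinner x (a *\<^sub>C y) = cnj a * cinner x y"
  by (metis cinner_commute cinner_scaleC_left complex_cnj_mult)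

lemma cinner_minus_left: "cinner (- x) y = - cinner x y"
proof -
  have "- x = (-1) *\<^sub>C x" by (simp add: scaleC_minus_left)
  then show ?thesis by (simp add: cinner_scaleC_left)
qed

lemma cinner_minus_right: "cinner x (- y) = - cinner x y"
proof -
  have "- y = (-1) *\<^sub>C y" by (simp add: scaleC_minus_left)
  then show ?thesis by (simp add: cinner_scaleC_right)
qed

lemma cinner_diff_left: "cinner (x - y) z = cinner x z - cinner y z"
  using cinner_add_left[of x "- y" z] by (simp add: cinner_minus_left)

lemma cinner_diff_right: "cinner x (y - z) = cinner x y - cinner x z"
  using cinner_add_right[of x y "- z"] by (simp add: cinner_minus_right)

lemma cinner_scaleR_left: "cinner (r *\<^sub>R x) y = complex_of_real r * cinner x y"
  by (simp add: scaleR_scaleC cinner_scaleC_left)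

lemma cinner_scaleR_right: "cinner x (r *\<^sub>R y) = complex_of_real r * cinner x y"
  by (simp add: scaleR_scaleC cinner_scaleC_right)

lemma cinner_sum_left: "cinner (\<Sum>i\<in>A. f i) y = (\<Sum>i\<in>A. cinner (f i) y)"
  by (induction A rule: infinite_finite_induct) (auto simp: cinner_add_left)

lemma cinner_sum_right: "cinner x (\<Sum>i\<in>A. f i) = (\<Sum>i\<in>A. cinner x (f i))"
  by (induction A rule: infinite_finite_induct) (auto simp: cinner_add_right)

lemma Im_cinner_self [simp]: "Im (cinner x x) = 0"
proof -
  have "Im (cinner x x) = Im (cnj (cinner x x))" using cinner_commute[of x x] by simp
  then show ?thesis by simp
qed

lemma norm_sq_cinner: "(norm x)\<^sup>2 = Re (cinner x x)"
  by (simp add: norm_eq_sqrt_cinner cinner_ge_zero)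

lemma cinner_self_norm: "cinner x x = complex_of_real ((norm x)\<^sup>2)"
  by (simp add: complex_eq_iff norm_sq_cinner)

lemma cinner_Cauchy_Schwarz: "cmod (cinner x y) \<le> norm x * norm y"
proof (cases "y = 0")
  case True then show ?thesis by simp
next
  case False
  define a where "a = cinner x y / cinner y y"
  have yy: "cinner y y = complex_of_real ((norm y)\<^sup>2)" by (rule cinner_self_norm)
  have ny: "norm y > 0" using False by simp
  have "0 \<le> Re (cinner (x - a *\<^sub>C y) (x - a *\<^sub>C y))" by (rule cinner_ge_zero)
  also have "cinner (x - a *\<^sub>C y) (x - a *\<^sub>C y)
      = cinner x x - cnj a * cinner x y - a * cinner y x + a * cnj a * cinner y y"
    by (simp add: cinner_diff_left cinner_diff_right cinner_scaleC_left cinner_scaleC_right algebra_simps)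
  also have "a * cnj a * cinner y y = cnj a * cinner x y"
    using ny by (simp add: a_def yy field_simps)
  finally have "0 \<le> Re (cinner x x - a * cinner y x)" by simp
  also have "a * cinner y x = complex_of_real ((cmod (cinner x y))\<^sup>2 / (norm y)\<^sup>2)"
  proof -
    have "a * cinner y x = cinner x y * cnj (cinner x y) / cinner y y"
      by (simp add: a_def cinner_commute[of y x])
    also have "\<dots> = complex_of_real ((cmod (cinner x y))\<^sup>2) / complex_of_real ((norm y)\<^sup>2)"
      by (simp only: yy complex_norm_square[symmetric] norm_of_real)
    finally show ?thesis by simp
  qed
  finally have "(cmod (cinner x y))\<^sup>2 / (norm y)\<^sup>2 \<le> (norm x)\<^sup>2"
    by (simp add: norm_sq_cinner)
  then have "(cmod (cinner x y))\<^sup>2 \<le> (norm x * norm y)\<^sup>2"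
    using ny by (simp add: field_simps power_mult_distrib)
  then show ?thesis by (rule power2_le_imp_le) simp
qed

lemma Re_cinner_le: "Re (cinner x y) \<le> norm x * norm y"
  using complex_Re_le_cmod[of "cinner x y"] cinner_Cauchy_Schwarz[of x y] by linarith

lemma norm_add_sq: "(norm (x + y))\<^sup>2 = (norm x)\<^sup>2 + (norm y)\<^sup>2 + 2 * Re (cinner x y)"
proof -
  have "Re (cinner y x) = Re (cinner x y)" by (subst cinner_commute) simp
  then show ?thesis
    by (simp add: norm_sq_cinner cinner_add_left cinner_add_right)
qed

lemma norm_diff_sq: "(norm (x - y))\<^sup>2 = (norm x)\<^sup>2 + (norm y)\<^sup>2 - 2 * Re (cinner x y)"
  using norm_add_sq[of x "- y"] by (simp add: cinner_minus_right)

lemma cinner_polarization: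
  "4 * cinner x y = complex_of_real ((norm (x + y))\<^sup>2) - complex_of_real ((norm (x - y))\<^sup>2)
     + \<i> * complex_of_real ((norm (x + \<i> *\<^sub>C y))\<^sup>2) - \<i> * complex_of_real ((norm (x - \<i> *\<^sub>C y))\<^sup>2)"
  unfolding cinner_self_norm[symmetric]
  by (simp add: cinner_add_left cinner_add_right cinner_diff_left cinner_diff_right
      cinner_scaleC_left cinner_scaleC_right algebra_simps)

lemma cinner_ext: "(\<And>z. cinner x z = cinner y z) \<Longrightarrow> x = y"
proof -
  assume h: "\<And>z. cinner x z = cinner y z"
  have "cinner (x - y) (x - y) = 0" by (simp add: cinner_diff_left h)
  then show ?thesis using cinner_eq_zero_iff by simp
qed

end

lemma bounded_bilinear_cinner: "bounded_bilinear (cinner :: 'a::complex_inner \<Rightarrow> 'a \<Rightarrow> complex)"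
proof
  fix a a' b b' :: 'a and r :: real
  show "cinner (a + a') b = cinner a b + cinner a' b" by (rule cinner_add_left)
  show "cinner a (b + b') = cinner a b + cinner a b'" by (rule cinner_add_right)
  show "cinner (r *\<^sub>R a) b = r *\<^sub>R cinner a b" by (simp add: cinner_scaleR_left scaleR_conv_of_real)
  show "cinner a (r *\<^sub>R b) = r *\<^sub>R cinner a b" by (simp add: cinner_scaleR_right scaleR_conv_of_real)
next
  show "\<exists>K. \<forall>a b. norm (cinner a b) \<le> norm a * norm b * K"
    by (rule exI[of _ 1]) (simp add: cinner_Cauchy_Schwarz)
qed

lemma tendsto_cinner [tendsto_intros]:
  "(f \<longlongrightarrow> (a::'a::complex_inner)) F \<Longrightarrow> (g \<longlongrightarrow> b) F \<Longrightarrow> ((\<lambda>n. cinner (f n) (g n)) \<longlongrightarrow> cinner a b) F"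
  by (rule bounded_bilinear.tendsto[OF bounded_bilinear_cinner])

lemma continuous_on_cinner [continuous_intros]:
  "continuous_on S (f :: _ \<Rightarrow> 'a::complex_inner) \<Longrightarrow> continuous_on S g \<Longrightarrow> continuous_on S (\<lambda>x. cinner (f x) (g x))"
  by (rule bounded_bilinear.continuous_on[OF bounded_bilinear_cinner])

lemma sums_cinner_left:
  fixes f :: "nat \<Rightarrow> 'a::complex_inner"
  shows "f sums s \<Longrightarrow> (\<lambda>n. cinner (f n) y) sums cinner s y"
  by (rule bounded_linear.sums[OF bounded_bilinear.bounded_linear_left[OF bounded_bilinear_cinner]])

lemma sums_cinner_right:
  fixes f :: "nat \<Rightarrow> 'a::complex_inner"
  shows "f sums s \<Longrightarrow> (\<lambda>n. cinner y (f n)) sums cinner y s"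
  by (rule bounded_linear.sums[OF bounded_bilinear.bounded_linear_right[OF bounded_bilinear_cinner]])

lemma bounded_bilinear_scaleC: "bounded_bilinear (scaleC :: complex \<Rightarrow> 'a::complex_normed_vector \<Rightarrow> 'a)"
proof
  fix a a' :: complex and b b' :: 'a and r :: real
  show "(a + a') *\<^sub>C b = a *\<^sub>C b + a' *\<^sub>C b" by (rule scaleC_add_left)
  show "a *\<^sub>C (b + b') = a *\<^sub>C b + a *\<^sub>C b'" by (rule scaleC_add_right)
  show "(r *\<^sub>R a) *\<^sub>C b = r *\<^sub>R (a *\<^sub>C b)" by (simp add: scaleR_scaleC scaleR_conv_of_real)
  show "a *\<^sub>C (r *\<^sub>R b) = r *\<^sub>R (a *\<^sub>C b)" by (simp add: scaleR_scaleC mult.commute)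
next
  show "\<exists>K. \<forall>a b. norm (a *\<^sub>C (b::'a)) \<le> norm a * norm b * K"
    by (rule exI[of _ 1]) (simp add: norm_scaleC)
qed

lemma tendsto_scaleC [tendsto_intros]:
  "(f \<longlongrightarrow> a) F \<Longrightarrow> (g \<longlongrightarrow> b) F \<Longrightarrow> ((\<lambda>n. f n *\<^sub>C (g n :: 'a::complex_normed_vector)) \<longlongrightarrow> a *\<^sub>C b) F"
  by (rule bounded_bilinear.tendsto[OF bounded_bilinear_scaleC])

lemma sums_scaleC: "f sums s \<Longrightarrow> (\<lambda>n. c *\<^sub>C f n) sums (c *\<^sub>C s :: 'a::complex_normed_vector)"
  by (rule bounded_linear.sums[OF bounded_bilinear.bounded_linear_right[OF bounded_bilinear_scaleC]])

lemma dense_orthogonal_zero: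
  fixes z :: "'a::complex_inner"
  assumes "dense_set S" "\<And>x. x \<in> S \<Longrightarrow> cinner x z = 0"
  shows "z = 0"
proof -
  have "z \<in> closure S" using assms(1) by (simp add: dense_set_def)
  then obtain f where f: "\<And>n. f n \<in> S" "f \<longlonglongrightarrow> z" unfolding closure_sequential by blast
  have "(\<lambda>n. cinner (f n) z) \<longlonglongrightarrow> cinner z z" by (intro tendsto_intros f)
  moreover have "(\<lambda>n. cinner (f n) z) = (\<lambda>n. 0)" using f assms(2) by auto
  ultimately have "cinner z z = 0" using LIMSEQ_unique tendsto_const by metis
  then show ?thesis using cinner_eq_zero_iff by blast
qed

section \<open>The projection theorem\<close>

text \<open>The projection theorem is proved once for an abstract real inner product on a Banach space,
  and then applied to the real parts of the complex inner products on \<open>H\<close> and on \<open>H \<times> H\<close>.\<close>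

locale real_inner_form =
  fixes ip :: "'b::{real_normed_vector,complete_space} \<Rightarrow> 'b \<Rightarrow> real"
  assumes ip_add: "ip (x + y) z = ip x z + ip y z"
    and ip_scale: "ip (r *\<^sub>R x) y = r * ip x y"
    and ip_sym: "ip x y = ip y x"
    and ip_norm: "ip x x = (norm x)\<^sup>2"
begin

lemma ip_add_right: "ip z (x + y) = ip z x + ip z y"
  using ip_add ip_sym by metis

lemma ip_scale_right: "ip y (r *\<^sub>R x) = r * ip y x"
  using ip_scale ip_sym by metis

lemma ip_diff: "ip (x - y) z = ip x z - ip y z"
  using ip_add[of x "- y" z] ip_scale[of "-1" y z] by simp

lemma ip_diff_right: "ip z (x - y) = ip z x - ip z y"
  using ip_diff ip_sym by metis

lemma norm_diff_sq_ip: "(norm (x - y))\<^sup>2 = (norm x)\<^sup>2 + (norm y)\<^sup>2 - 2 * ip x y"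
proof -
  have "(norm (x - y))\<^sup>2 = ip (x - y) (x - y)" by (simp add: ip_norm)
  also have "\<dots> = ip x x + ip y y - 2 * ip x y"
    by (simp add: ip_diff ip_diff_right ip_sym[of y x])
  finally show ?thesis by (simp add: ip_norm)
qed

lemma parallelogram: "(norm ((a::'b) + b))\<^sup>2 + (norm (a - b))\<^sup>2 = 2 * (norm a)\<^sup>2 + 2 * (norm b)\<^sup>2"
proof -
  have "(norm (a + b))\<^sup>2 + (norm (a - b))\<^sup>2 = ip (a + b) (a + b) + ip (a - b) (a - b)"
    by (simp add: ip_norm)
  also have "\<dots> = 2 * ip a a + 2 * ip b b"
    by (simp add: ip_add ip_add_right ip_diff ip_diff_right ip_sym[of b a])
  finally show ?thesis by (simp add: ip_norm)
qed

lemma minimizing_sequence_Cauchy: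
  fixes M :: "'b set" and m :: "nat \<Rightarrow> 'b"
  assumes mid: "\<And>x y. x \<in> M \<Longrightarrow> y \<in> M \<Longrightarrow> (1/2) *\<^sub>R (x + y) \<in> M"
    and dle: "\<And>q. q \<in> M \<Longrightarrow> d \<le> (norm (h - q))\<^sup>2"
    and mM: "\<And>n. m n \<in> M" and md: "\<And>n. (norm (h - m n))\<^sup>2 < d + 1 / real (Suc n)"
  shows "Cauchy m"
proof -
  have key: "(norm (m i - m j))\<^sup>2 \<le> 2 / real (Suc i) + 2 / real (Suc j)" for i j
  proof -
    have e1: "(h - m i) + (h - m j) = 2 *\<^sub>R (h - (1/2) *\<^sub>R (m i + m j))"
      by (simp add: algebra_simps scaleR_2)
    have "(norm ((h - m i) + (h - m j)))\<^sup>2 = 4 * (norm (h - (1/2) *\<^sub>R (m i + m j)))\<^sup>2"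
      unfolding e1 by (simp add: power2_eq_square)
    moreover have "d \<le> (norm (h - (1/2) *\<^sub>R (m i + m j)))\<^sup>2" using dle mid mM by blast
    moreover have "(h - m i) - (h - m j) = - (m i - m j)" by simp
    ultimately have "4 * d + (norm (m i - m j))\<^sup>2 \<le> 2 * (norm (h - m i))\<^sup>2 + 2 * (norm (h - m j))\<^sup>2"
      using parallelogram[of "h - m i" "h - m j"] by (simp add: norm_minus_commute)
    then show ?thesis using md[of i] md[of j] by simp
  qed
  show ?thesis
  proof (rule metric_CauchyI)
    fix e :: real assume e: "e > 0"
    obtain N where N: "4 / e\<^sup>2 < real N" using reals_Archimedean2 by blast
    have small: "2 / real (Suc i) < e\<^sup>2 / 2" if "N \<le> i" for i
    proof -
      have "4 / e\<^sup>2 < real (Suc i)" using N that by simp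
      then show ?thesis using e by (simp add: field_simps)
    qed
    have "dist (m i) (m j) < e" if "N \<le> i" "N \<le> j" for i j
    proof -
      have "(dist (m i) (m j))\<^sup>2 < e\<^sup>2"
        using key[of i j] small[OF that(1)] small[OF that(2)] by (simp add: dist_norm)
      then show ?thesis using e by (simp add: power_less_imp_less_base)
    qed
    then show "\<exists>N. \<forall>i\<ge>N. \<forall>j\<ge>N. dist (m i) (m j) < e" by blast
  qed
qed

lemma nearest_point_exists:
  fixes M :: "'b set"
  assumes cl: "closed M" and z: "0 \<in> M"
    and add: "\<And>x y. x \<in> M \<Longrightarrow> y \<in> M \<Longrightarrow> x + y \<in> M"
    and sc: "\<And>r x. x \<in> M \<Longrightarrow> r *\<^sub>R x \<in> M"
  shows "\<exists>p\<in>M. \<forall>q\<in>M. (norm (h - p))\<^sup>2 \<le> (norm (h - q))\<^sup>2"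
proof -
  define S where "S = (\<lambda>m. (norm (h - m))\<^sup>2) ` M"
  define d where "d = Inf S"
  have Sne: "S \<noteq> {}" using z by (auto simp: S_def)
  have Sbdd: "bdd_below S" by (auto simp: S_def bdd_below_def intro!: exI[of _ 0])
  have dle: "d \<le> (norm (h - m))\<^sup>2" if "m \<in> M" for m
    unfolding d_def using that Sbdd by (auto simp: S_def intro!: cInf_lower)
  have "\<exists>m\<in>M. (norm (h - m))\<^sup>2 < d + 1 / real (Suc n)" for n
  proof -
    have "d < d + 1 / real (Suc n)" by simp
    then obtain s where "s \<in> S" "s < d + 1 / real (Suc n)"
      using cInf_less_iff[OF Sne Sbdd] unfolding d_def by blast
    then show ?thesis by (auto simp: S_def)
  qed
  then obtain m where mM: "\<And>n. m n \<in> M" and md: "\<And>n. (norm (h - m n))\<^sup>2 < d + 1 / real (Suc n)"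
    by metis
  have "Cauchy m" by (rule minimizing_sequence_Cauchy[OF _ dle mM md]) (use add sc in blast)
  then obtain p where mp: "m \<longlonglongrightarrow> p" using Cauchy_convergent_iff convergent_def by blast
  have pM: "p \<in> M" using closed_sequentially[OF cl mM mp] .
  have "(\<lambda>n. (norm (h - m n))\<^sup>2) \<longlonglongrightarrow> (norm (h - p))\<^sup>2"
    by (intro tendsto_intros mp)
  moreover have "(\<lambda>n. d + 1 / real (Suc n)) \<longlonglongrightarrow> d + 0"
    by (intro tendsto_intros LIMSEQ_inverse_real_of_nat[unfolded inverse_eq_divide])
  ultimately have "(norm (h - p))\<^sup>2 \<le> d + 0"
    by (rule LIMSEQ_le) (use md less_imp_le in blast)
  then have "(norm (h - p))\<^sup>2 \<le> (norm (h - q))\<^sup>2" if "q \<in> M" for q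
    using dle[OF that] by linarith
  with pM show ?thesis by blast
qed

lemma nearest_point_orthogonal:
  fixes M :: "'b set"
  assumes pM: "p \<in> M" and pmin: "\<And>q. q \<in> M \<Longrightarrow> (norm (h - p))\<^sup>2 \<le> (norm (h - q))\<^sup>2"
    and add: "\<And>x y. x \<in> M \<Longrightarrow> y \<in> M \<Longrightarrow> x + y \<in> M"
    and sc: "\<And>r x. x \<in> M \<Longrightarrow> r *\<^sub>R x \<in> M"
    and mM: "m \<in> M"
  shows "ip (h - p) m = 0"
proof (rule ccontr)
  define a where "a = ip (h - p) m"
  assume "ip (h - p) m \<noteq> 0"
  then have a: "a \<noteq> 0" and nm: "m \<noteq> 0" by (auto simp: a_def ip_scale_right[of _ 0 m, simplified])
  define t where "t = a / (norm m)\<^sup>2"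
  have "(norm (h - (p + t *\<^sub>R m)))\<^sup>2 = (norm ((h - p) - t *\<^sub>R m))\<^sup>2"
    by (simp add: algebra_simps)
  also have "\<dots> = (norm (h - p))\<^sup>2 + t\<^sup>2 * (norm m)\<^sup>2 - 2 * t * a"
    by (simp add: norm_diff_sq_ip ip_scale_right a_def power_mult_distrib)
  also have "\<dots> = (norm (h - p))\<^sup>2 - a\<^sup>2 / (norm m)\<^sup>2"
    using nm by (simp add: t_def power2_eq_square field_simps)
  also have "\<dots> < (norm (h - p))\<^sup>2"
    using nm a by simp
  finally show False using pmin[of "p + t *\<^sub>R m"] add sc pM mM by fastforce
qed

theorem projection_exists:
  fixes M :: "'b set"
  assumes "closed M" and "0 \<in> M"
    and add: "\<And>x y. x \<in> M \<Longrightarrow> y \<in> M \<Longrightarrow> x + y \<in> M"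
    and sc: "\<And>r x. x \<in> M \<Longrightarrow> r *\<^sub>R x \<in> M"
  shows "\<exists>p\<in>M. \<forall>m\<in>M. ip (h - p) m = 0"
  using nearest_point_exists[OF assms] nearest_point_orthogonal[OF _ _ add sc] by metis

end

lemma projection_exists_complex:
  fixes M :: "'a::chilbert_space set"
  assumes cl: "closed M" and z: "0 \<in> M"
    and add: "\<And>x y. x \<in> M \<Longrightarrow> y \<in> M \<Longrightarrow> x + y \<in> M"
    and sc: "\<And>c x. x \<in> M \<Longrightarrow> c *\<^sub>C x \<in> M"
  shows "\<exists>p\<in>M. \<forall>m\<in>M. cinner (h - p) m = 0"
proof -
  interpret real_inner_form "\<lambda>x y::'a. Re (cinner x y)"
  proof
    fix x y z :: 'a and r :: real
    show "Re (cinner (x + y) z) = Re (cinner x z) + Re (cinner y z)" by (simp add: cinner_add_left)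
    show "Re (cinner (r *\<^sub>R x) y) = r * Re (cinner x y)" by (simp add: cinner_scaleR_left)
    show "Re (cinner x y) = Re (cinner y x)" by (subst cinner_commute) simp
    show "Re (cinner x x) = (norm x)\<^sup>2" by (simp add: norm_sq_cinner)
  qed
  have scR: "r *\<^sub>R x \<in> M" if "x \<in> M" for r x using sc[OF that] by (simp add: scaleR_scaleC)
  obtain p where pM: "p \<in> M" and pr: "\<And>m. m \<in> M \<Longrightarrow> Re (cinner (h - p) m) = 0"
    using projection_exists[OF cl z add scR] by blast
  have "cinner (h - p) m = 0" if mM: "m \<in> M" for m
  proof -
    have "Re (cinner (h - p) (\<i> *\<^sub>C m)) = 0" using pr sc mM by blast
    then have "Im (cinner (h - p) m) = 0" by (simp add: cinner_scaleC_right)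
    with pr[OF mM] show ?thesis by (simp add: complex_eq_iff)
  qed
  with pM show ?thesis by blast
qed

definition prod_re_inner :: "'a::complex_inner \<times> 'a \<Rightarrow> 'a \<times> 'a \<Rightarrow> real" where
  "prod_re_inner x y = Re (cinner (fst x) (fst y) + cinner (snd x) (snd y))"

lemma graph_projection_exists:
  fixes M :: "('a::chilbert_space \<times> 'a) set"
  assumes cl: "closed M" and z: "(0, 0) \<in> M"
    and add: "\<And>x y u v. (x, y) \<in> M \<Longrightarrow> (u, v) \<in> M \<Longrightarrow> (x + u, y + v) \<in> M"
    and sc: "\<And>c x y. (x, y) \<in> M \<Longrightarrow> (c *\<^sub>C x, c *\<^sub>C y) \<in> M"
  shows "\<exists>p q. (p, q) \<in> M \<and> (\<forall>x y. (x, y) \<in> M \<longrightarrow> cinner (a - p) x + cinner (b - q) y = 0)"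
proof -
  interpret real_inner_form "prod_re_inner :: 'a \<times> 'a \<Rightarrow> _"
  proof
    fix x y z :: "'a \<times> 'a" and r :: real
    show "prod_re_inner (x + y) z = prod_re_inner x z + prod_re_inner y z"
      by (simp add: prod_re_inner_def cinner_add_left)
    show "prod_re_inner (r *\<^sub>R x) y = r * prod_re_inner x y"
      by (simp add: prod_re_inner_def cinner_scaleR_left algebra_simps)
    have "Re (cinner (fst x) (fst y)) = Re (cinner (fst y) (fst x))" by (subst cinner_commute) simp
    moreover have "Re (cinner (snd x) (snd y)) = Re (cinner (snd y) (snd x))" by (subst cinner_commute) simp
    ultimately show "prod_re_inner x y = prod_re_inner y x" by (simp add: prod_re_inner_def)
    show "prod_re_inner x x = (norm x)\<^sup>2"
      by (cases x) (simp add: prod_re_inner_def norm_Pair norm_sq_cinner[symmetric])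
  qed
  have M0: "0 \<in> M" using z by (simp add: zero_prod_def)
  have Madd: "x + y \<in> M" if "x \<in> M" "y \<in> M" for x y
    using add[of "fst x" "snd x" "fst y" "snd y"] that by (simp add: plus_prod_def)
  have MscR: "r *\<^sub>R x \<in> M" if "x \<in> M" for r x
    using sc[of "fst x" "snd x" "complex_of_real r"] that by (simp add: scaleR_scaleC scaleR_prod_def)
  obtain p q where pM: "(p, q) \<in> M" and pr: "\<And>m. m \<in> M \<Longrightarrow> prod_re_inner ((a, b) - (p, q)) m = 0"
    using projection_exists[OF cl M0 Madd MscR, of "(a, b)"] by fastforce
  have "cinner (a - p) x + cinner (b - q) y = 0" if mM: "(x, y) \<in> M" for x y
  proof -
    have r1: "Re (cinner (a - p) x + cinner (b - q) y) = 0"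
      using pr[OF mM] by (simp add: prod_re_inner_def)
    have "Re (cinner (a - p) (\<i> *\<^sub>C x) + cinner (b - q) (\<i> *\<^sub>C y)) = 0"
      using pr[OF sc[OF mM, of \<i>]] by (simp add: prod_re_inner_def)
    then have "Im (cinner (a - p) x + cinner (b - q) y) = 0" by (simp add: cinner_scaleC_right)
    with r1 show ?thesis by (simp add: complex_eq_iff)
  qed
  with pM show ?thesis by blast
qed

lemma csubspace_closure:
  fixes M :: "'a::complex_normed_vector set"
  assumes "csubspace M"
  shows "csubspace (closure M)"
proof -
  have z: "0 \<in> M" and ad: "\<And>x y. x \<in> M \<Longrightarrow> y \<in> M \<Longrightarrow> x + y \<in> M"
    and sc: "\<And>c x. x \<in> M \<Longrightarrow> c *\<^sub>C x \<in> M" using assms by (auto simp: csubspace_def)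
  have "x + y \<in> closure M" if xy: "x \<in> closure M" "y \<in> closure M" for x y
  proof -
    obtain f where f: "\<And>n. f n \<in> M" "f \<longlonglongrightarrow> x" using xy(1) unfolding closure_sequential by blast
    obtain g where g: "\<And>n. g n \<in> M" "g \<longlonglongrightarrow> y" using xy(2) unfolding closure_sequential by blast
    have "(\<lambda>n. f n + g n) \<longlonglongrightarrow> x + y" by (intro tendsto_intros f g)
    moreover have "\<And>n. f n + g n \<in> M" using f g ad by blast
    ultimately show ?thesis unfolding closure_sequential by (intro exI[of _ "\<lambda>n. f n + g n"]) blast
  qed
  moreover have "c *\<^sub>C x \<in> closure M" if xy: "x \<in> closure M" for c x
  proof -
    obtain f where f: "\<And>n. f n \<in> M" "f \<longlonglongrightarrow> x" using xy(1) unfolding closure_sequential by blast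
    have "(\<lambda>n. c *\<^sub>C f n) \<longlonglongrightarrow> c *\<^sub>C x" by (intro tendsto_intros f)
    moreover have "\<And>n. c *\<^sub>C f n \<in> M" using f sc by blast
    ultimately show ?thesis unfolding closure_sequential by (intro exI[of _ "\<lambda>n. c *\<^sub>C f n"]) blast
  qed
  moreover have "0 \<in> closure M" using z closure_subset by blast
  ultimately show ?thesis by (auto simp: csubspace_def)
qed

lemma dense_if_orthogonal_complement_zero:
  fixes M :: "'a::chilbert_space set"
  assumes "csubspace M" and orth: "\<And>h. (\<And>m. m \<in> M \<Longrightarrow> cinner m h = 0) \<Longrightarrow> h = 0"
  shows "dense_set M"
proof -
  have cs: "csubspace (closure M)" by (rule csubspace_closure[OF assms(1)])
  have "h \<in> closure M" for h
  proof -
    obtain p where pM: "p \<in> closure M" and pr: "\<And>m. m \<in> closure M \<Longrightarrow> cinner (h - p) m = 0"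
      using projection_exists_complex[of "closure M" h] cs unfolding csubspace_def by blast
    have "h - p = 0"
    proof (rule orth)
      fix m assume "m \<in> M"
      then have "cinner (h - p) m = 0" using pr closure_subset by blast
      then show "cinner m (h - p) = 0" by (subst cinner_commute) simp
    qed
    then show ?thesis using pM by simp
  qed
  then show ?thesis unfolding dense_set_def by blast
qed

section \<open>Square roots of bounded positive operators\<close>

definition clinear :: "('a::complex_vector \<Rightarrow> 'a) \<Rightarrow> bool" where
  "clinear B \<longleftrightarrow> (\<forall>x y. B (x + y) = B x + B y) \<and> (\<forall>c x. B (c *\<^sub>C x) = c *\<^sub>C B x)"

lemma clinear_add: "clinear B \<Longrightarrow> B (x + y) = B x + B y"
  by (simp add: clinear_def)

lemma clinear_scaleC: "clinear B \<Longrightarrow> B (c *\<^sub>C x) = c *\<^sub>C B x"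
  by (simp add: clinear_def)

lemma clinear_scaleR: "clinear B \<Longrightarrow> B (r *\<^sub>R x) = r *\<^sub>R B x"
  by (simp add: clinear_def scaleR_scaleC)

lemma clinear_zero: "clinear B \<Longrightarrow> B 0 = 0"
  using clinear_scaleC[of B 0 0] by simp

lemma clinear_diff: "clinear B \<Longrightarrow> B (x - y) = B x - B y"
  using clinear_add[of B x "- y"] clinear_scaleR[of B "-1" y] by simp

lemma clinear_sum: "clinear B \<Longrightarrow> B (\<Sum>i\<in>A. f i) = (\<Sum>i\<in>A. B (f i))"
  by (induction A rule: infinite_finite_induct) (auto simp: clinear_zero clinear_add)

lemma clinear_funpow: "clinear B \<Longrightarrow> clinear (B ^^ k)"
  by (induction k) (auto simp: clinear_def)

lemma clinear_id_minus: "clinear B \<Longrightarrow> clinear (\<lambda>x. x - B x)"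
  by (simp add: clinear_def scaleC_diff_right)

lemma clinear_bounded_tendsto:
  assumes "clinear B" "\<And>x. norm (B x) \<le> K * norm x" "f \<longlonglongrightarrow> l"
  shows "(\<lambda>n. B (f n)) \<longlonglongrightarrow> B l"
proof -
  have "bounded_linear B"
  proof (rule bounded_linear_intro[where K=K])
    show "B (x + y) = B x + B y" for x y using assms(1) by (rule clinear_add)
    show "B (r *\<^sub>R x) = r *\<^sub>R B x" for r x using assms(1) by (rule clinear_scaleR)
    show "norm (B x) \<le> norm x * K" for x using assms(2)[of x] by (simp add: mult.commute)
  qed
  then show ?thesis using assms(3) by (rule bounded_linear.tendsto)
qed

definition hermitian :: "('a::complex_inner \<Rightarrow> 'a) \<Rightarrow> bool" where
  "hermitian B \<longleftrightarrow> (\<forall>x y. cinner (B x) y = cinner x (B y))"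

lemma hermitian_id_minus: "hermitian B \<Longrightarrow> hermitian (\<lambda>x. x - B x)"
  by (simp add: hermitian_def cinner_diff_left cinner_diff_right)

lemma hermitian_funpow:
  assumes "hermitian B"
  shows "hermitian (B ^^ k)"
proof (induction k)
  case 0 show ?case by (simp add: hermitian_def)
next
  case (Suc k)
  have "cinner ((B ^^ Suc k) x) y = cinner x ((B ^^ Suc k) y)" for x y
  proof -
    have "cinner ((B ^^ Suc k) x) y = cinner ((B ^^ k) x) (B y)" using assms by (simp add: hermitian_def)
    also have "\<dots> = cinner x ((B ^^ k) (B y))" using Suc by (simp add: hermitian_def)
    also have "\<dots> = cinner x ((B ^^ Suc k) y)" by (simp only: funpow_swap1 funpow.simps comp_def)
    finally show ?thesis .
  qed
  then show ?case by (simp add: hermitian_def)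
qed

lemma hermitian_Im_cinner_zero:
  assumes "hermitian B"
  shows "Im (cinner (B x) x) = 0"
proof -
  have "cinner (B x) x = cinner x (B x)" using assms by (simp add: hermitian_def)
  also have "\<dots> = cnj (cinner (B x) x)" by (rule cinner_commute)
  finally have "Im (cinner (B x) x) = Im (cnj (cinner (B x) x))" by simp
  then show ?thesis by simp
qed

lemma hermitian_norm_le:
  assumes l: "clinear B" and s: "hermitian B" and q: "\<And>x. \<bar>Re (cinner (B x) x)\<bar> \<le> (norm x)\<^sup>2"
  shows "norm (B h) \<le> norm h"
proof (cases "B h = 0")
  case True then show ?thesis by simp
next
  case False
  have hne: "h \<noteq> 0" using False clinear_zero[OF l] by auto
  define g where "g = (norm h / norm (B h)) *\<^sub>R B h"
  have ng: "norm g = norm h" using False by (simp add: g_def)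
  have Bg: "Re (cinner (B h) g) = norm h * norm (B h)"
    using False by (simp add: g_def cinner_scaleR_right norm_sq_cinner[symmetric] power2_eq_square)
  have "Re (cinner (B g) h) = Re (cinner (B h) g)"
    using s cinner_commute[of h "B g"] by (simp add: hermitian_def)
  then have "Re (cinner (B (h + g)) (h + g)) - Re (cinner (B (h - g)) (h - g)) = 4 * Re (cinner (B h) g)"
    by (simp add: clinear_add[OF l] clinear_diff[OF l] cinner_add_left cinner_add_right
        cinner_diff_left cinner_diff_right)
  then have "4 * Re (cinner (B h) g) \<le> (norm (h + g))\<^sup>2 + (norm (h - g))\<^sup>2"
    using q[of "h + g"] q[of "h - g"] by linarith
  also have "\<dots> = 4 * (norm h)\<^sup>2" by (simp add: norm_add_sq norm_diff_sq ng)
  finally have "norm h * norm (B h) \<le> norm h * norm h" using Bg by (simp add: power2_eq_square)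
  then show ?thesis using hne by simp
qed

lemma norm_funpow_le:
  fixes B :: "'a::real_normed_vector \<Rightarrow> 'a"
  assumes "\<And>x. norm (B x) \<le> norm x"
  shows "norm ((B ^^ k) x) \<le> norm x"
  using assms by (induction k) (auto intro: order_trans)

lemma funpow_commute: "(\<And>x. C (B x) = B (C x)) \<Longrightarrow> C ((B ^^ k) x) = (B ^^ k) (C x)"
  by (induction k) auto

definition nonneg_coeffs :: "real poly \<Rightarrow> bool" where
  "nonneg_coeffs p \<longleftrightarrow> (\<forall>k. 0 \<le> coeff p k)"

lemma nonneg_coeffs_add: "nonneg_coeffs p \<Longrightarrow> nonneg_coeffs q \<Longrightarrow> nonneg_coeffs (p + q)"
  by (simp add: nonneg_coeffs_def)

lemma nonneg_coeffs_mult: "nonneg_coeffs p \<Longrightarrow> nonneg_coeffs q \<Longrightarrow> nonneg_coeffs (p * q)"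
  by (simp add: nonneg_coeffs_def coeff_mult sum_nonneg)

lemma nonneg_coeffs_smult: "0 \<le> a \<Longrightarrow> nonneg_coeffs p \<Longrightarrow> nonneg_coeffs (smult a p)"
  by (simp add: nonneg_coeffs_def)

lemma nonneg_coeffs_X: "nonneg_coeffs [:0, 1:]"
  by (auto simp: nonneg_coeffs_def coeff_pCons split: nat.split)

lemma nonneg_coeffs_poly_one: "nonneg_coeffs p \<Longrightarrow> 0 \<le> poly p 1"
  by (simp add: poly_altdef nonneg_coeffs_def sum_nonneg)

text \<open>On \<open>[0, 1]\<close> the polynomials \<open>p\<^sub>n\<close> increase to \<open>1 - sqrt (1 - t)\<close>. Since all their coefficients
  are nonnegative, \<open>\<parallel>p\<^sub>n(Q)\<parallel> \<le> p\<^sub>n(1) \<le> 1\<close> for every contraction \<open>Q\<close>, and the same bound for \<open>p\<^sub>n - p\<^sub>m\<close>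
  makes \<open>p\<^sub>n(Q) x\<close> a Cauchy sequence. For \<open>Q = 1 - P\<close> the limit \<open>X\<close> satisfies \<open>2 X = Q + X\<^sup>2\<close>, i.e.
  \<open>(1 - X)\<^sup>2 = P\<close>.\<close>

primrec sqrt_approx_poly :: "nat \<Rightarrow> real poly" where
  "sqrt_approx_poly 0 = 0"
| "sqrt_approx_poly (Suc n) = smult (1/2) ([:0, 1:] + sqrt_approx_poly n * sqrt_approx_poly n)"

lemma nonneg_coeffs_sqrt_approx_poly: "nonneg_coeffs (sqrt_approx_poly n)"
proof (induction n)
  case 0 show ?case by (simp add: nonneg_coeffs_def)
next
  case (Suc n) show ?case
    unfolding sqrt_approx_poly.simps by (intro nonneg_coeffs_smult nonneg_coeffs_add nonneg_coeffs_mult nonneg_coeffs_X Suc) simp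
qed

lemma nonneg_coeffs_sqrt_approx_poly_step:
  "nonneg_coeffs (sqrt_approx_poly (Suc n) - sqrt_approx_poly n)"
proof (induction n)
  case 0 then show ?case using nonneg_coeffs_smult[OF _ nonneg_coeffs_X, of "1/2"] by simp
next
  case (Suc n)
  have "sqrt_approx_poly (Suc (Suc n)) - sqrt_approx_poly (Suc n)
      = smult (1/2) ((sqrt_approx_poly (Suc n) - sqrt_approx_poly n) * (sqrt_approx_poly (Suc n) + sqrt_approx_poly n))"
    by (simp add: algebra_simps smult_add_right smult_diff_right)
  then show ?case
    by (simp only:) (intro nonneg_coeffs_smult nonneg_coeffs_mult nonneg_coeffs_add Suc nonneg_coeffs_sqrt_approx_poly, simp)
qed

lemma nonneg_coeffs_sqrt_approx_poly_mono:
  "m \<le> n \<Longrightarrow> nonneg_coeffs (sqrt_approx_poly n - sqrt_approx_poly m)"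
proof (induction n rule: dec_induct)
  case base then show ?case by (simp add: nonneg_coeffs_def)
next
  case (step n)
  have "(sqrt_approx_poly (Suc n) - sqrt_approx_poly n) + (sqrt_approx_poly n - sqrt_approx_poly m)
      = sqrt_approx_poly (Suc n) - sqrt_approx_poly m"
    by simp
  with nonneg_coeffs_add[OF nonneg_coeffs_sqrt_approx_poly_step[of n] step.IH] show ?case by simp
qed

lemma sqrt_approx_poly_one_bounds: "0 \<le> poly (sqrt_approx_poly n) 1 \<and> poly (sqrt_approx_poly n) 1 \<le> 1"
proof (induction n)
  case 0 then show ?case by simp
next
  case (Suc n)
  then have "(poly (sqrt_approx_poly n) 1)\<^sup>2 \<le> 1" by (simp add: power_le_one)
  then show ?case by (simp add: power2_eq_square)
qed

lemma sqrt_approx_poly_one_Cauchy: "Cauchy (\<lambda>n. poly (sqrt_approx_poly n) 1)"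
proof -
  have "incseq (\<lambda>n. poly (sqrt_approx_poly n) 1)"
    using nonneg_coeffs_poly_one[OF nonneg_coeffs_sqrt_approx_poly_mono] by (simp add: incseq_def)
  then have "convergent (\<lambda>n. poly (sqrt_approx_poly n) 1)"
    using incseq_convergent[of _ 1] sqrt_approx_poly_one_bounds by (metis convergentI)
  then show ?thesis by (rule convergent_Cauchy)
qed

locale hermitian_contraction =
  fixes Q :: "'a::chilbert_space \<Rightarrow> 'a"
  assumes Q_lin: "clinear Q"
    and Q_norm: "\<And>x. norm (Q x) \<le> norm x"
    and Q_herm: "hermitian Q"
begin

definition poly_op :: "real poly \<Rightarrow> 'a \<Rightarrow> 'a" where
  "poly_op p x = (\<Sum>k<Suc (degree p). coeff p k *\<^sub>R (Q ^^ k) x)"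

lemma poly_op_altdef:
  assumes "degree p < N"
  shows "poly_op p x = (\<Sum>k<N. coeff p k *\<^sub>R (Q ^^ k) x)"
  unfolding poly_op_def
  by (rule sum.mono_neutral_left) (use assms in \<open>auto simp: coeff_eq_0\<close>)

lemma poly_op_pCons: "poly_op (pCons a p) x = a *\<^sub>R x + Q (poly_op p x)"
proof -
  define N where "N = Suc (degree p)"
  have "degree (pCons a p) < Suc N" using degree_pCons_le[of a p] by (simp add: N_def)
  then have "poly_op (pCons a p) x = (\<Sum>k<Suc N. coeff (pCons a p) k *\<^sub>R (Q ^^ k) x)"
    by (rule poly_op_altdef)
  also have "\<dots> = a *\<^sub>R x + (\<Sum>k<N. coeff p k *\<^sub>R (Q ^^ Suc k) x)"
    by (subst sum.lessThan_Suc_shift) simp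
  also have "(\<Sum>k<N. coeff p k *\<^sub>R (Q ^^ Suc k) x) = Q (\<Sum>k<N. coeff p k *\<^sub>R (Q ^^ k) x)"
    by (simp add: clinear_sum[OF Q_lin] clinear_scaleR[OF Q_lin])
  finally show ?thesis by (simp add: poly_op_def N_def)
qed

lemma poly_op_0 [simp]: "poly_op 0 x = 0"
  by (simp add: poly_op_def)

lemma poly_op_add: "poly_op (p + q) x = poly_op p x + poly_op q x"
proof -
  define N where "N = Suc (max (degree p) (degree q))"
  have "degree p < N" "degree q < N" "degree (p + q) < N"
    using degree_add_le[of p "max (degree p) (degree q)" q] by (auto simp: N_def)
  then show ?thesis
    by (simp add: poly_op_altdef scaleR_add_left sum.distrib del: sum.lessThan_Suc)
qed

lemma poly_op_smult: "poly_op (smult a p) x = a *\<^sub>R poly_op p x"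
proof -
  have "degree (smult a p) < Suc (degree p)" using degree_smult_le[of a p] by simp
  then show ?thesis
    unfolding poly_op_altdef poly_op_def by (simp add: scaleR_sum_right del: sum.lessThan_Suc)
qed

lemma poly_op_diff: "poly_op (p - q) x = poly_op p x - poly_op q x"
  using poly_op_add[of p "- q" x] poly_op_smult[of "-1" q x] by simp

lemma poly_op_mult: "poly_op (p * q) x = poly_op p (poly_op q x)"
proof (induction p arbitrary: x)
  case 0 then show ?case by simp
next
  case (pCons a p)
  have "poly_op (pCons a p * q) x = a *\<^sub>R poly_op q x + Q (poly_op (p * q) x)"
    by (simp add: poly_op_add poly_op_smult poly_op_pCons)
  also have "\<dots> = poly_op (pCons a p) (poly_op q x)" by (simp add: pCons.IH poly_op_pCons)
  finally show ?case .
qed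

lemma poly_op_X: "poly_op [:0, 1:] x = Q x"
  by (simp add: poly_op_pCons clinear_zero[OF Q_lin])

lemma clinear_poly_op: "clinear (poly_op p)"
proof -
  have l: "clinear (Q ^^ k)" for k by (rule clinear_funpow[OF Q_lin])
  have "poly_op p (x + y) = poly_op p x + poly_op p y" for x y
    unfolding poly_op_def by (simp add: clinear_add[OF l] scaleR_add_right sum.distrib del: sum.lessThan_Suc)
  moreover have "poly_op p (c *\<^sub>C x) = c *\<^sub>C poly_op p x" for c x
    unfolding poly_op_def
    by (simp add: clinear_scaleC[OF l] scaleC_sum_right scaleR_scaleC mult.commute del: sum.lessThan_Suc)
  ultimately show ?thesis unfolding clinear_def by blast
qed

lemma hermitian_poly_op: "hermitian (poly_op p)"
  using hermitian_funpow[OF Q_herm]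
  by (simp add: hermitian_def poly_op_def cinner_sum_left cinner_sum_right cinner_scaleR_left
      cinner_scaleR_right del: sum.lessThan_Suc)

lemma poly_op_commute:
  assumes "clinear B" "\<And>x. B (Q x) = Q (B x)"
  shows "B (poly_op p x) = poly_op p (B x)"
  unfolding poly_op_def
  by (simp add: clinear_sum[OF assms(1)] clinear_scaleR[OF assms(1)]
      funpow_commute[where C=B and B=Q, OF assms(2)] del: sum.lessThan_Suc)

lemma norm_poly_op_le:
  assumes "nonneg_coeffs p"
  shows "norm (poly_op p x) \<le> poly p 1 * norm x"
proof -
  have "norm (poly_op p x) \<le> (\<Sum>k<Suc (degree p). norm (coeff p k *\<^sub>R (Q ^^ k) x))"
    unfolding poly_op_def by (rule norm_sum)
  also have "\<dots> \<le> (\<Sum>k<Suc (degree p). coeff p k * norm x)"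
  proof (rule sum_mono)
    fix k
    have "norm ((Q ^^ k) x) \<le> norm x" by (rule norm_funpow_le[OF Q_norm])
    then show "norm (coeff p k *\<^sub>R (Q ^^ k) x) \<le> coeff p k * norm x"
      using assms by (simp add: nonneg_coeffs_def mult_left_mono)
  qed
  also have "\<dots> = poly p 1 * norm x"
    by (simp add: poly_altdef sum_distrib_right lessThan_Suc_atMost)
  finally show ?thesis .
qed

abbreviation sqrt_approx :: "nat \<Rightarrow> 'a \<Rightarrow> 'a" where
  "sqrt_approx n \<equiv> poly_op (sqrt_approx_poly n)"

lemma norm_sqrt_approx_le: "norm (sqrt_approx n x) \<le> norm x"
proof -
  have "norm (sqrt_approx n x) \<le> poly (sqrt_approx_poly n) 1 * norm x"
    by (rule norm_poly_op_le[OF nonneg_coeffs_sqrt_approx_poly])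
  also have "\<dots> \<le> norm x"
    using sqrt_approx_poly_one_bounds[of n] by (simp add: mult_left_le_one_le)
  finally show ?thesis .
qed

lemma dist_sqrt_approx_le:
  assumes "m \<le> n"
  shows "dist (sqrt_approx m x) (sqrt_approx n x)
    \<le> dist (poly (sqrt_approx_poly m) 1) (poly (sqrt_approx_poly n) 1) * norm x"
proof -
  have "dist (sqrt_approx m x) (sqrt_approx n x) = norm (poly_op (sqrt_approx_poly n - sqrt_approx_poly m) x)"
    by (simp add: dist_norm poly_op_diff norm_minus_commute)
  also have "\<dots> \<le> poly (sqrt_approx_poly n - sqrt_approx_poly m) 1 * norm x"
    by (rule norm_poly_op_le[OF nonneg_coeffs_sqrt_approx_poly_mono[OF assms]])
  also have "poly (sqrt_approx_poly n - sqrt_approx_poly m) 1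
      = dist (poly (sqrt_approx_poly m) 1) (poly (sqrt_approx_poly n) 1)"
    using nonneg_coeffs_poly_one[OF nonneg_coeffs_sqrt_approx_poly_mono[OF assms]]
    by (simp add: dist_real_def)
  finally show ?thesis .
qed

lemma sqrt_approx_Cauchy: "Cauchy (\<lambda>n. sqrt_approx n x)"
proof (rule metric_CauchyI)
  fix e :: real assume e: "0 < e"
  define e' where "e' = e / (norm x + 1)"
  have "0 < e'" using e by (simp add: e'_def add_nonneg_pos)
  then obtain M where M: "\<And>m n. m \<ge> M \<Longrightarrow> n \<ge> M
      \<Longrightarrow> dist (poly (sqrt_approx_poly m) 1) (poly (sqrt_approx_poly n) 1) < e'"
    using metric_CauchyD[OF sqrt_approx_poly_one_Cauchy] by blast
  have "norm x / (norm x + 1) < 1" by (simp add: add_nonneg_pos)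
  then have e'x: "e' * norm x < e"
    using mult_strict_left_mono[OF _ e] by (fastforce simp: e'_def)
  have ordered: "dist (sqrt_approx m x) (sqrt_approx n x) < e" if "m \<le> n" "m \<ge> M" "n \<ge> M" for m n
  proof -
    have "dist (sqrt_approx m x) (sqrt_approx n x)
        \<le> dist (poly (sqrt_approx_poly m) 1) (poly (sqrt_approx_poly n) 1) * norm x"
      by (rule dist_sqrt_approx_le[OF that(1)])
    also have "\<dots> \<le> e' * norm x"
      by (intro mult_right_mono less_imp_le M that norm_ge_zero)
    finally show ?thesis using e'x by linarith
  qed
  have "dist (sqrt_approx m x) (sqrt_approx n x) < e" if "m \<ge> M" "n \<ge> M" for m n
    using ordered[of m n] ordered[of n m] that by (cases "m \<le> n") (auto simp: dist_commute)
  then show "\<exists>M. \<forall>m\<ge>M. \<forall>n\<ge>M. dist (sqrt_approx m x) (sqrt_approx n x) < e"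
    by blast
qed

definition sqrt_approx_lim :: "'a \<Rightarrow> 'a" where
  "sqrt_approx_lim x = lim (\<lambda>n. sqrt_approx n x)"

lemma sqrt_approx_LIMSEQ: "(\<lambda>n. sqrt_approx n x) \<longlonglongrightarrow> sqrt_approx_lim x"
  unfolding sqrt_approx_lim_def using sqrt_approx_Cauchy Cauchy_convergent_iff convergent_LIMSEQ_iff by blast

lemma norm_sqrt_approx_lim_le: "norm (sqrt_approx_lim x) \<le> norm x"
  by (rule LIMSEQ_le_const2[OF tendsto_norm[OF sqrt_approx_LIMSEQ]]) (simp add: norm_sqrt_approx_le)

lemma sqrt_approx_tendsto:
  assumes "y \<longlonglongrightarrow> z"
  shows "(\<lambda>n. sqrt_approx n (y n)) \<longlonglongrightarrow> sqrt_approx_lim z"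
proof -
  have bound: "norm (sqrt_approx n (y n) - sqrt_approx_lim z)
      \<le> norm (y n - z) + norm (sqrt_approx n z - sqrt_approx_lim z)" for n
  proof -
    have "norm (sqrt_approx n (y n) - sqrt_approx_lim z)
        = norm (sqrt_approx n (y n - z) + (sqrt_approx n z - sqrt_approx_lim z))"
      by (simp add: clinear_diff[OF clinear_poly_op])
    also have "\<dots> \<le> norm (sqrt_approx n (y n - z)) + norm (sqrt_approx n z - sqrt_approx_lim z)"
      by (rule norm_triangle_ineq)
    finally have "norm (sqrt_approx n (y n) - sqrt_approx_lim z)
        \<le> norm (sqrt_approx n (y n - z)) + norm (sqrt_approx n z - sqrt_approx_lim z)" .
    then show ?thesis using norm_sqrt_approx_le[of n "y n - z"] by linarith
  qed
  have "(\<lambda>n. norm (y n - z)) \<longlonglongrightarrow> 0"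
    using assms by (rule tendsto_norm_zero[OF LIM_zero])
  moreover have "(\<lambda>n. norm (sqrt_approx n z - sqrt_approx_lim z)) \<longlonglongrightarrow> 0"
    using sqrt_approx_LIMSEQ by (rule tendsto_norm_zero[OF LIM_zero])
  ultimately have lim: "(\<lambda>n. norm (y n - z) + norm (sqrt_approx n z - sqrt_approx_lim z)) \<longlonglongrightarrow> 0"
    using tendsto_add by fastforce
  have "\<forall>n. norm (sqrt_approx n (y n) - sqrt_approx_lim z)
      \<le> norm (y n - z) + norm (sqrt_approx n z - sqrt_approx_lim z)"
    using bound by blast
  from Lim_null_comparison[OF always_eventually[OF this] lim] show ?thesis
    by (rule LIM_zero_cancel)
qed

lemma clinear_sqrt_approx_lim: "clinear sqrt_approx_lim"
proof -
  have "sqrt_approx_lim (x + y) = sqrt_approx_lim x + sqrt_approx_lim y" for x y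
  proof (rule LIMSEQ_unique[OF sqrt_approx_LIMSEQ])
    show "(\<lambda>n. sqrt_approx n (x + y)) \<longlonglongrightarrow> sqrt_approx_lim x + sqrt_approx_lim y"
      using tendsto_add[OF sqrt_approx_LIMSEQ[of x] sqrt_approx_LIMSEQ[of y]]
      by (simp add: clinear_add[OF clinear_poly_op])
  qed
  moreover have "sqrt_approx_lim (c *\<^sub>C x) = c *\<^sub>C sqrt_approx_lim x" for c x
  proof (rule LIMSEQ_unique[OF sqrt_approx_LIMSEQ])
    show "(\<lambda>n. sqrt_approx n (c *\<^sub>C x)) \<longlonglongrightarrow> c *\<^sub>C sqrt_approx_lim x"
      using tendsto_scaleC[OF tendsto_const sqrt_approx_LIMSEQ[of x], of c]
      by (simp add: clinear_scaleC[OF clinear_poly_op])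
  qed
  ultimately show ?thesis by (simp add: clinear_def)
qed

lemma hermitian_sqrt_approx_lim: "hermitian sqrt_approx_lim"
proof -
  have "cinner (sqrt_approx_lim x) y = cinner x (sqrt_approx_lim y)" for x y
  proof (rule LIMSEQ_unique)
    show "(\<lambda>n. cinner (sqrt_approx n x) y) \<longlonglongrightarrow> cinner (sqrt_approx_lim x) y"
      by (intro tendsto_intros sqrt_approx_LIMSEQ)
    show "(\<lambda>n. cinner (sqrt_approx n x) y) \<longlonglongrightarrow> cinner x (sqrt_approx_lim y)"
      using tendsto_cinner[OF tendsto_const sqrt_approx_LIMSEQ[of y], of x] hermitian_poly_op
      by (simp add: hermitian_def)
  qed
  then show ?thesis by (simp add: hermitian_def)
qed

lemma sqrt_approx_lim_commute:
  assumes "clinear B" "\<And>x. norm (B x) \<le> K * norm x" "\<And>x. B (Q x) = Q (B x)"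
  shows "B (sqrt_approx_lim x) = sqrt_approx_lim (B x)"
proof (rule LIMSEQ_unique)
  show "(\<lambda>n. B (sqrt_approx n x)) \<longlonglongrightarrow> B (sqrt_approx_lim x)"
    by (rule clinear_bounded_tendsto[OF assms(1,2) sqrt_approx_LIMSEQ])
  show "(\<lambda>n. B (sqrt_approx n x)) \<longlonglongrightarrow> sqrt_approx_lim (B x)"
    using sqrt_approx_LIMSEQ[of "B x"] by (simp add: poly_op_commute[OF assms(1,3)])
qed

lemma sqrt_approx_lim_fixpoint: "sqrt_approx_lim x = (1/2) *\<^sub>R (Q x + sqrt_approx_lim (sqrt_approx_lim x))"
proof (rule LIMSEQ_unique)
  show "(\<lambda>n. sqrt_approx (Suc n) x) \<longlonglongrightarrow> sqrt_approx_lim x"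
    by (rule LIMSEQ_Suc[OF sqrt_approx_LIMSEQ])
  have "(\<lambda>n. sqrt_approx (Suc n) x) = (\<lambda>n. (1/2) *\<^sub>R (Q x + sqrt_approx n (sqrt_approx n x)))"
    by (simp only: sqrt_approx_poly.simps poly_op_smult poly_op_add poly_op_X poly_op_mult)
  also have "\<dots> \<longlonglongrightarrow> (1/2) *\<^sub>R (Q x + sqrt_approx_lim (sqrt_approx_lim x))"
    by (rule tendsto_scaleR[OF tendsto_const tendsto_add[OF tendsto_const sqrt_approx_tendsto[OF sqrt_approx_LIMSEQ]]])
  finally show "(\<lambda>n. sqrt_approx (Suc n) x) \<longlonglongrightarrow> (1/2) *\<^sub>R (Q x + sqrt_approx_lim (sqrt_approx_lim x))" .
qed

end

text \<open>The norm bound \<open>2\<close> is an arbitrary normalisation: it holds for all operators to which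
  square roots are applied below, and it is preserved by taking square roots.\<close>

definition is_sqrt :: "('a::complex_inner \<Rightarrow> 'a) \<Rightarrow> ('a \<Rightarrow> 'a) \<Rightarrow> bool" where
  "is_sqrt P Y \<longleftrightarrow> clinear Y \<and> hermitian Y \<and> (\<forall>x. norm (Y x) \<le> 2 * norm x)
    \<and> (\<forall>x. 0 \<le> Re (cinner (Y x) x)) \<and> (\<forall>x. Y (Y x) = P x)
    \<and> (\<forall>B K. clinear B \<longrightarrow> (\<forall>x. norm (B x) \<le> K * norm x) \<longrightarrow> (\<forall>x. B (P x) = P (B x))
          \<longrightarrow> (\<forall>x. B (Y x) = Y (B x)))"

lemma hermitian_contraction_id_minus:
  fixes P :: "'a::chilbert_space \<Rightarrow> 'a"
  assumes l: "clinear P" and h: "hermitian P" and pos: "\<And>x. 0 \<le> Re (cinner (P x) x)"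
    and bound: "\<And>x. norm (P x) \<le> 2 * norm x"
  shows "hermitian_contraction (\<lambda>x. x - P x)"
proof
  show "clinear (\<lambda>x. x - P x)" by (rule clinear_id_minus[OF l])
  show "hermitian (\<lambda>x. x - P x)" by (rule hermitian_id_minus[OF h])
  have "\<bar>Re (cinner (x - P x) x)\<bar> \<le> (norm x)\<^sup>2" for x
  proof -
    have "Re (cinner (P x) x) \<le> norm (P x) * norm x" by (rule Re_cinner_le)
    also have "\<dots> \<le> 2 * norm x * norm x" by (rule mult_right_mono[OF bound norm_ge_zero])
    finally have "Re (cinner (P x) x) \<le> 2 * norm x * norm x" .
    moreover have "Re (cinner (x - P x) x) = norm x * norm x - Re (cinner (P x) x)"
      using norm_sq_cinner[of x] by (simp add: cinner_diff_left power2_eq_square)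
    ultimately show ?thesis
      using pos[of x] by (simp add: power2_eq_square)
  qed
  then show "norm (x - P x) \<le> norm x" for x
    by (rule hermitian_norm_le[OF clinear_id_minus[OF l] hermitian_id_minus[OF h]])
qed

theorem sqrt_exists:
  fixes P :: "'a::chilbert_space \<Rightarrow> 'a"
  assumes l: "clinear P" and h: "hermitian P" and pos: "\<And>x. 0 \<le> Re (cinner (P x) x)"
    and bound: "\<And>x. norm (P x) \<le> 2 * norm x"
  shows "\<exists>Y. is_sqrt P Y"
proof -
  interpret hermitian_contraction "\<lambda>x. x - P x"
    by (rule hermitian_contraction_id_minus[OF assms])
  define Y where "Y x = x - sqrt_approx_lim x" for x
  have "Y (Y x) = P x" for x
  proof -
    have "2 *\<^sub>R sqrt_approx_lim x = (x - P x) + sqrt_approx_lim (sqrt_approx_lim x)"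
      by (subst sqrt_approx_lim_fixpoint) simp
    then show ?thesis by (simp add: Y_def clinear_diff[OF clinear_sqrt_approx_lim] algebra_simps scaleR_2)
  qed
  moreover have "0 \<le> Re (cinner (Y x) x)" for x
  proof -
    have "Re (cinner (sqrt_approx_lim x) x) \<le> norm (sqrt_approx_lim x) * norm x"
      by (rule Re_cinner_le)
    also have "\<dots> \<le> norm x * norm x" by (rule mult_right_mono[OF norm_sqrt_approx_lim_le norm_ge_zero])
    finally have "Re (cinner (sqrt_approx_lim x) x) \<le> norm x * norm x" .
    moreover have "Re (cinner (Y x) x) = norm x * norm x - Re (cinner (sqrt_approx_lim x) x)"
      using norm_sq_cinner[of x] by (simp add: Y_def cinner_diff_left power2_eq_square)
    ultimately show ?thesis by simp
  qed
  moreover have "norm (Y x) \<le> 2 * norm x" for x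
    using norm_triangle_ineq4[of x "sqrt_approx_lim x"] norm_sqrt_approx_lim_le[of x] by (simp add: Y_def)
  moreover have "B (Y x) = Y (B x)"
    if "clinear B" "\<And>x. norm (B x) \<le> K * norm x" "\<And>x. B (P x) = P (B x)" for B K x
  proof -
    have "B (x - P x) = B x - P (B x)" for x using that(1,3) by (simp add: clinear_diff)
    then show ?thesis
      using sqrt_approx_lim_commute[OF that(1,2)] by (simp add: Y_def clinear_diff[OF that(1)])
  qed
  moreover have "clinear Y" "hermitian Y"
    unfolding Y_def using clinear_id_minus[OF clinear_sqrt_approx_lim]
      hermitian_id_minus[OF hermitian_sqrt_approx_lim] by auto
  ultimately have "is_sqrt P Y" unfolding is_sqrt_def by blast
  then show ?thesis by blast
qed

section \<open>Operators given by their graphs\<close>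

lemma op_add: "is_operator T \<Longrightarrow> (x, y) \<in> T \<Longrightarrow> (u, v) \<in> T \<Longrightarrow> (x + u, y + v) \<in> T"
  by (simp add: is_operator_def)

lemma op_scaleC: "is_operator T \<Longrightarrow> (x, y) \<in> T \<Longrightarrow> (c *\<^sub>C x, c *\<^sub>C y) \<in> T"
  by (simp add: is_operator_def)

lemma op_zero: "is_operator T \<Longrightarrow> (0, 0) \<in> T"
  by (simp add: is_operator_def)

lemma op_value_zero: "is_operator T \<Longrightarrow> (0, y) \<in> T \<Longrightarrow> y = 0"
  by (simp add: is_operator_def)

lemma op_diff: "is_operator T \<Longrightarrow> (x, y) \<in> T \<Longrightarrow> (u, v) \<in> T \<Longrightarrow> (x - u, y - v) \<in> T"
  using op_add[of T x y "- u" "- v"] op_scaleC[of T u v "-1"] by (simp add: scaleC_minus_left)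

lemma op_value_unique: "is_operator T \<Longrightarrow> (x, y) \<in> T \<Longrightarrow> (x, z) \<in> T \<Longrightarrow> y = z"
  using op_diff[of T x y x z] op_value_zero[of T "y - z"] by simp

lemma op_dom_iff: "x \<in> op_dom T \<longleftrightarrow> (\<exists>y. (x, y) \<in> T)"
  by (force simp: op_dom_def)

lemma op_range_iff: "y \<in> op_range T \<longleftrightarrow> (\<exists>x. (x, y) \<in> T)"
  by (force simp: op_range_def)

lemma csubspace_op_range:
  assumes "is_operator T"
  shows "csubspace (op_range T)"
proof -
  have "0 \<in> op_range T" using op_zero[OF assms] by (auto simp: op_range_iff)
  moreover have "a + b \<in> op_range T" if ab: "a \<in> op_range T" "b \<in> op_range T" for a b
  proof -
    obtain u v where "(u, a) \<in> T" "(v, b) \<in> T" using ab by (auto simp: op_range_iff)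
    then have "(u + v, a + b) \<in> T" by (rule op_add[OF assms])
    then show ?thesis by (auto simp: op_range_iff)
  qed
  moreover have "c *\<^sub>C a \<in> op_range T" if a: "a \<in> op_range T" for c a
  proof -
    obtain u where "(u, a) \<in> T" using a by (auto simp: op_range_iff)
    then have "(c *\<^sub>C u, c *\<^sub>C a) \<in> T" by (rule op_scaleC[OF assms])
    then show ?thesis by (auto simp: op_range_iff)
  qed
  ultimately show ?thesis unfolding csubspace_def by blast
qed

lemma adjoint_iff: "(y, z) \<in> adjoint T \<longleftrightarrow> (\<forall>x w. (x, w) \<in> T \<longrightarrow> cinner w y = cinner x z)"
  by (simp add: adjoint_def)

lemma op_inverse_iff [simp]: "(x, y) \<in> op_inverse T \<longleftrightarrow> (y, x) \<in> T"
  by (simp add: op_inverse_def)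

lemma op_inverse_inverse [simp]: "op_inverse (op_inverse T) = T"
  by (auto simp: op_inverse_def)

lemma adjoint_op_inverse: "adjoint (op_inverse T) = op_inverse (adjoint T)"
  by (auto simp: adjoint_def op_inverse_def)

lemma op_dom_op_inverse: "op_dom (op_inverse T) = op_range T"
  by (force simp: op_dom_def op_range_def op_inverse_def)

lemma closed_op_inverse: "closed T \<Longrightarrow> closed (op_inverse (T :: ('a::topological_space \<times> 'a) set))"
proof -
  assume c: "closed T"
  have eq: "op_inverse T = (\<lambda>p. (snd p, fst p)) -` T" by (auto simp: op_inverse_def)
  show ?thesis unfolding eq by (rule closed_vimage[OF c]) (intro continuous_intros)
qed

lemma is_operator_op_inverse:
  assumes "is_operator T" "\<And>x. (x, 0) \<in> T \<Longrightarrow> x = 0"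
  shows "is_operator (op_inverse T)"
  using assms unfolding is_operator_def op_inverse_def by auto

lemma is_operator_adjoint:
  fixes T :: "'a::complex_inner lop"
  assumes "densely_defined T"
  shows "is_operator (adjoint T)"
proof -
  have "z = 0" if "(0, z) \<in> adjoint T" for z
  proof (rule dense_orthogonal_zero[OF assms[unfolded densely_defined_def]])
    fix x assume "x \<in> op_dom T"
    then obtain w where xw: "(x, w) \<in> T" by (auto simp: op_dom_def)
    then show "cinner x z = 0" using that xw unfolding adjoint_def by auto
  qed
  then show ?thesis
    unfolding is_operator_def by (auto simp: adjoint_def cinner_add_right cinner_scaleC_right)
qed

lemma closed_adjoint: "closed (adjoint (T :: 'a::complex_inner lop))"
proof -
  have "adjoint T = (\<Inter>p\<in>T. {q. cinner (snd p) (fst q) = cinner (fst p) (snd q)})"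
    unfolding adjoint_def by (auto; metis fst_conv snd_conv)
  moreover have "closed {q. cinner (snd p) (fst q) = cinner (fst p) (snd q)}" for p :: "'a \<times> 'a"
    by (intro closed_Collect_eq continuous_on_cinner continuous_on_const continuous_on_fst
        continuous_on_snd continuous_on_id)
  ultimately show ?thesis by auto
qed

lemma closure_graph_add:
  fixes M :: "('a::complex_normed_vector \<times> 'a) set"
  assumes add: "\<And>x y u v. (x, y) \<in> M \<Longrightarrow> (u, v) \<in> M \<Longrightarrow> (x + u, y + v) \<in> M"
    and "(x, y) \<in> closure M" "(u, v) \<in> closure M"
  shows "(x + u, y + v) \<in> closure M"
proof -
  obtain f where f: "\<And>n. f n \<in> M" "f \<longlonglongrightarrow> (x, y)" using assms(2) unfolding closure_sequential by blast
  obtain g where g: "\<And>n. g n \<in> M" "g \<longlonglongrightarrow> (u, v)" using assms(3) unfolding closure_sequential by blast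
  have "(\<lambda>n. f n + g n) \<longlonglongrightarrow> (x, y) + (u, v)" by (intro tendsto_intros f g)
  moreover have "f n + g n \<in> M" for n
    using add[of "fst (f n)" "snd (f n)" "fst (g n)" "snd (g n)"] f(1)[of n] g(1)[of n]
    by (simp add: plus_prod_def)
  ultimately show ?thesis unfolding closure_sequential by (intro exI[of _ "\<lambda>n. f n + g n"]) simp
qed

lemma closure_graph_scaleC:
  fixes M :: "('a::complex_normed_vector \<times> 'a) set"
  assumes sc: "\<And>c x y. (x, y) \<in> M \<Longrightarrow> (c *\<^sub>C x, c *\<^sub>C y) \<in> M"
    and "(x, y) \<in> closure M"
  shows "(c *\<^sub>C x, c *\<^sub>C y) \<in> closure M"
proof -
  obtain f where f: "\<And>n. f n \<in> M" "f \<longlonglongrightarrow> (x, y)" using assms(2) unfolding closure_sequential by blast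
  have "(\<lambda>n. (c *\<^sub>C fst (f n), c *\<^sub>C snd (f n))) \<longlonglongrightarrow> (c *\<^sub>C x, c *\<^sub>C y)"
    using tendsto_fst[OF f(2)] tendsto_snd[OF f(2)] by (intro tendsto_intros) simp_all
  moreover have "(c *\<^sub>C fst (f n), c *\<^sub>C snd (f n)) \<in> M" for n
    using sc[of "fst (f n)" "snd (f n)" c] f(1)[of n] by simp
  ultimately show ?thesis unfolding closure_sequential
    by (intro exI[of _ "\<lambda>n. (c *\<^sub>C fst (f n), c *\<^sub>C snd (f n))"]) simp
qed

lemma Cauchy_if_dist_eq_convergent:
  assumes "convergent g" "\<And>m n. dist (f m) (f n) = dist (g m) (g n :: 'b::metric_space)"
  shows "Cauchy (f :: nat \<Rightarrow> 'c::metric_space)"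
proof (rule metric_CauchyI)
  fix e :: real assume "0 < e"
  then obtain M where "\<And>m n. m \<ge> M \<Longrightarrow> n \<ge> M \<Longrightarrow> dist (g m) (g n) < e"
    using metric_CauchyD[OF convergent_Cauchy[OF assms(1)]] by blast
  then show "\<exists>M. \<forall>m\<ge>M. \<forall>n\<ge>M. dist (f m) (f n) < e" using assms(2) by metis
qed

lemma cinner_eq_if_norm_eq:
  fixes A S :: "'a::complex_inner lop"
  assumes A: "is_operator A" and S: "is_operator S"
    and n: "\<And>x y z. (x, y) \<in> A \<Longrightarrow> (x, z) \<in> S \<Longrightarrow> norm z = norm y"
    and xy: "(x, y) \<in> A" "(x', y') \<in> A" and xz: "(x, z) \<in> S" "(x', z') \<in> S"
  shows "cinner z z' = cinner y y'"
proof -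
  have nc: "norm (z + c *\<^sub>C z') = norm (y + c *\<^sub>C y')" for c
    using n[OF op_add[OF A xy(1) op_scaleC[OF A xy(2)]] op_add[OF S xz(1) op_scaleC[OF S xz(2)]]] .
  have nd: "norm (z - c *\<^sub>C z') = norm (y - c *\<^sub>C y')" for c
    using n[OF op_diff[OF A xy(1) op_scaleC[OF A xy(2)]] op_diff[OF S xz(1) op_scaleC[OF S xz(2)]]] .
  have "4 * cinner z z' = 4 * cinner y y'"
    unfolding cinner_polarization using nc[of 1] nd[of 1] nc[of \<i>] nd[of \<i>] by simp
  then show ?thesis by simp
qed

section \<open>The modulus of a closed densely defined operator\<close>

text \<open>Von Neumann's construction: \<open>R = (1 + A\<^sup>* A)\<^sup>-\<^sup>1\<close> is a bounded positive injective operator, and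
  with \<open>V = R\<^bsup>1/2\<^esup>\<close>, \<open>W = (1 - R)\<^bsup>1/2\<^esup>\<close> the operator \<open>\<bar>A\<bar> = W V\<^sup>-\<^sup>1 = (A\<^sup>* A)\<^bsup>1/2\<^esup>\<close> is given by the graph
  \<open>{(V u, W u)}\<close>. Since \<open>\<parallel>W V v\<parallel> = \<parallel>A R v\<parallel>\<close>, the graphs of \<open>A\<close> and \<open>\<bar>A\<bar>\<close> are isometric.\<close>

locale closed_densely_defined =
  fixes A :: "'a::chilbert_space lop"
  assumes closed_operator_A: "closed_operator A" and densely_defined_A: "densely_defined A"
begin

lemma is_operator_A: "is_operator A"
  using closed_operator_A by (simp add: closed_operator_def)

lemma closed_A: "closed A"
  using closed_operator_A by (simp add: closed_operator_def)

lemma is_operator_adjoint_A: "is_operator (adjoint A)"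
  by (rule is_operator_adjoint[OF densely_defined_A])

text \<open>\<open>(p, q) = (R h, A R h)\<close>: it is the projection of \<open>(h, 0)\<close> onto the graph of \<open>A\<close>.\<close>

lemma resolvent_exists: "\<exists>p q. (p, q) \<in> A \<and> (q, h - p) \<in> adjoint A"
proof -
  obtain p q where pq: "(p, q) \<in> A"
    and orth: "\<And>x y. (x, y) \<in> A \<Longrightarrow> cinner (h - p) x + cinner (0 - q) y = 0"
    using graph_projection_exists[OF closed_A op_zero[OF is_operator_A] op_add[OF is_operator_A]
        op_scaleC[OF is_operator_A], of h 0] by blast
  have "(q, h - p) \<in> adjoint A"
    unfolding adjoint_iff
  proof (intro allI impI)
    fix x w assume xw: "(x, w) \<in> A"
    have "cinner (h - p) x = cinner q w" using orth[OF xw] by (simp add: cinner_minus_left)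
    then have "cnj (cinner (h - p) x) = cnj (cinner q w)" by simp
    then show "cinner w q = cinner x (h - p)" by (metis cinner_commute)
  qed
  with pq show ?thesis by blast
qed

lemma resolvent_unique:
  assumes "(p, q) \<in> A" "(q, h - p) \<in> adjoint A" "(p', q') \<in> A" "(q', h - p') \<in> adjoint A"
  shows "p = p' \<and> q = q'"
proof -
  have "(p - p', q - q') \<in> A" using op_diff[OF is_operator_A assms(1,3)] .
  moreover have "(q - q', - (p - p')) \<in> adjoint A"
    using op_diff[OF is_operator_adjoint_A assms(2,4)] by simp
  ultimately have "cinner (q - q') (q - q') = - cinner (p - p') (p - p')"
    unfolding adjoint_iff by (metis cinner_minus_right)
  then have "Re (cinner (q - q') (q - q') + cinner (p - p') (p - p')) = 0" by simp
  then have "(norm (q - q'))\<^sup>2 + (norm (p - p'))\<^sup>2 = 0" by (simp add: norm_sq_cinner)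
  then show ?thesis by (simp add: add_nonneg_eq_0_iff)
qed

definition R :: "'a \<Rightarrow> 'a" where
  "R h = (SOME p. \<exists>q. (p, q) \<in> A \<and> (q, h - p) \<in> adjoint A)"

definition AR :: "'a \<Rightarrow> 'a" where
  "AR h = (SOME q. (R h, q) \<in> A \<and> (q, h - R h) \<in> adjoint A)"

lemma R_AR: "(R h, AR h) \<in> A \<and> (AR h, h - R h) \<in> adjoint A"
proof -
  have "\<exists>q. (R h, q) \<in> A \<and> (q, h - R h) \<in> adjoint A"
    unfolding R_def using resolvent_exists[of h] by (rule someI_ex)
  then show ?thesis unfolding AR_def by (rule someI_ex)
qed

lemma R_AR_graph: "(R h, AR h) \<in> A"
  using R_AR by blast

lemma AR_adjoint: "(AR h, h - R h) \<in> adjoint A"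
  using R_AR by blast

lemma R_AR_eqI:
  assumes "(p, q) \<in> A" "(q, h - p) \<in> adjoint A"
  shows "R h = p \<and> AR h = q"
  using resolvent_unique[OF R_AR_graph AR_adjoint assms] by blast

lemma cinner_AR: "(x, w) \<in> A \<Longrightarrow> cinner w (AR h) = cinner x (h - R h)"
  using AR_adjoint[of h] unfolding adjoint_iff by blast

lemma clinear_R: "clinear R" and clinear_AR: "clinear AR"
proof -
  have "R (h + g) = R h + R g \<and> AR (h + g) = AR h + AR g" for h g
    using op_add[OF is_operator_adjoint_A AR_adjoint[of h] AR_adjoint[of g]]
    by (intro R_AR_eqI op_add[OF is_operator_A R_AR_graph R_AR_graph]) (simp add: algebra_simps)
  moreover have "R (c *\<^sub>C h) = c *\<^sub>C R h \<and> AR (c *\<^sub>C h) = c *\<^sub>C AR h" for c h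
    using op_scaleC[OF is_operator_adjoint_A AR_adjoint[of h], of c]
    by (intro R_AR_eqI op_scaleC[OF is_operator_A R_AR_graph]) (simp add: scaleC_diff_right)
  ultimately show "clinear R" "clinear AR" by (simp_all add: clinear_def)
qed

lemma cinner_R: "cinner (R h) g = cinner (R h) (R g) + cinner (AR h) (AR g)"
  using cinner_AR[OF R_AR_graph, of h g] by (simp add: cinner_diff_right)

lemma hermitian_R: "hermitian R"
proof -
  have "cinner (R h) g = cinner h (R g)" for h g
  proof -
    have "cinner h (R g) = cnj (cinner (R g) (R h) + cinner (AR g) (AR h))"
      by (metis cinner_R cinner_commute)
    also have "\<dots> = cinner (R h) g"
      by (metis cinner_R cinner_commute complex_cnj_add)
    finally show ?thesis by simp
  qed
  then show ?thesis by (simp add: hermitian_def)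
qed

lemma cinner_R_self: "cinner (R h) h = complex_of_real ((norm (R h))\<^sup>2 + (norm (AR h))\<^sup>2)"
  by (simp only: cinner_R[of h h] cinner_self_norm of_real_add)

lemma Re_cinner_R_nonneg: "0 \<le> Re (cinner (R h) h)"
  by (simp add: cinner_R_self)

lemma norm_R_le: "norm (R h) \<le> norm h"
proof -
  have "(norm (R h))\<^sup>2 \<le> (norm (R h))\<^sup>2 + (norm (AR h))\<^sup>2" by simp
  also have "\<dots> = Re (cinner (R h) h)" by (simp add: cinner_R_self)
  also have "\<dots> \<le> norm (R h) * norm h" by (rule Re_cinner_le)
  finally have "norm (R h) * norm (R h) \<le> norm (R h) * norm h" by (simp add: power2_eq_square)
  then show ?thesis by (cases "norm (R h) = 0") auto
qed

lemma R_eq_zeroD: "R h = 0 \<Longrightarrow> h = 0"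
proof -
  assume "R h = 0"
  then have "AR h = 0" using R_AR_graph[of h] op_value_zero[OF is_operator_A] by simp
  then have "(0, h) \<in> adjoint A" using AR_adjoint[of h] \<open>R h = 0\<close> by simp
  then show "h = 0" using op_value_zero[OF is_operator_adjoint_A] by blast
qed

lemma norm_AR_sq: "complex_of_real ((norm (AR h))\<^sup>2) = cinner (R h) h - cinner (R (R h)) h"
proof -
  have "cinner (R (R h)) h = cinner (R h) (R h)" using hermitian_R by (simp add: hermitian_def)
  then show ?thesis by (simp add: cinner_R_self cinner_self_norm)
qed

definition V :: "'a \<Rightarrow> 'a" where
  "V = (SOME Y. is_sqrt R Y)"

definition W :: "'a \<Rightarrow> 'a" where
  "W = (SOME Y. is_sqrt (\<lambda>h. h - R h) Y)"

lemma is_sqrt_V: "is_sqrt R V"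
proof -
  have "norm (R x) \<le> 2 * norm x" for x using norm_R_le[of x] norm_ge_zero[of x] by linarith
  then have "\<exists>Y. is_sqrt R Y" by (rule sqrt_exists[OF clinear_R hermitian_R Re_cinner_R_nonneg])
  then show ?thesis unfolding V_def by (rule someI_ex)
qed

lemma is_sqrt_W: "is_sqrt (\<lambda>h. h - R h) W"
proof -
  have "0 \<le> Re (cinner (x - R x) x)" for x
    using Re_cinner_le[of "R x" x] norm_R_le[of x] mult_right_mono[OF norm_R_le norm_ge_zero, of x x]
    by (simp add: cinner_diff_left norm_sq_cinner[symmetric] power2_eq_square)
  moreover have "norm (x - R x) \<le> 2 * norm x" for x
    using norm_triangle_ineq4[of x "R x"] norm_R_le[of x] by simp
  ultimately have "\<exists>Y. is_sqrt (\<lambda>h. h - R h) Y"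
    by (rule sqrt_exists[OF clinear_id_minus[OF clinear_R] hermitian_id_minus[OF hermitian_R]])
  then show ?thesis unfolding W_def by (rule someI_ex)
qed

lemma clinear_V: "clinear V" and hermitian_V: "hermitian V" and norm_V_le: "norm (V x) \<le> 2 * norm x"
  and Re_cinner_V_nonneg: "0 \<le> Re (cinner (V x) x)" and V_V: "V (V x) = R x"
  using is_sqrt_V by (auto simp: is_sqrt_def)

lemma clinear_W: "clinear W" and hermitian_W: "hermitian W" and norm_W_le: "norm (W x) \<le> 2 * norm x"
  and Re_cinner_W_nonneg: "0 \<le> Re (cinner (W x) x)" and W_W: "W (W x) = x - R x"
  using is_sqrt_W by (auto simp: is_sqrt_def)

lemma R_V: "R (V x) = V (R x)"
  using is_sqrt_V clinear_R norm_R_le unfolding is_sqrt_def by (metis mult_1)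

lemma W_V: "W (V x) = V (W x)"
proof -
  have "R (h - R h) = R h - R (R h)" for h by (simp add: clinear_diff[OF clinear_R])
  then have "R (W x) = W (R x)" for x
    using is_sqrt_W clinear_R norm_R_le unfolding is_sqrt_def by (metis mult_1)
  then show ?thesis using is_sqrt_V clinear_W norm_W_le unfolding is_sqrt_def by metis
qed

lemma V_eq_zeroD: "V x = 0 \<Longrightarrow> x = 0"
  using V_V[of x] clinear_zero[OF clinear_V] R_eq_zeroD by metis

text \<open>The fourth root \<open>V4\<close> of \<open>R\<close> commutes with \<open>W\<close> and is only needed for positivity of \<open>\<bar>A\<bar>\<close>:
  \<open>\<langle>W u, V u\<rangle> = \<langle>W (V4 u), V4 u\<rangle>\<close>.\<close>

definition V4 :: "'a \<Rightarrow> 'a" where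
  "V4 = (SOME Y. is_sqrt V Y)"

lemma is_sqrt_V4: "is_sqrt V V4"
  unfolding V4_def by (rule someI_ex[OF sqrt_exists[OF clinear_V hermitian_V Re_cinner_V_nonneg norm_V_le]])

lemma W_V4: "W (V4 x) = V4 (W x)"
  using is_sqrt_V4 clinear_W norm_W_le W_V unfolding is_sqrt_def by metis

definition modulus :: "'a lop" where
  "modulus = range (\<lambda>u. (V u, W u))"

lemma modulus_iff: "(x, z) \<in> modulus \<longleftrightarrow> (\<exists>u. x = V u \<and> z = W u)"
  by (auto simp: modulus_def)

lemma is_operator_modulus: "is_operator modulus"
  unfolding is_operator_def modulus_iff
proof (intro conjI allI impI)
  show "\<exists>u. 0 = V u \<and> 0 = W u" using clinear_zero[OF clinear_V] clinear_zero[OF clinear_W] by metis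
  show "\<exists>u. x + u' = V u \<and> y + v = W u"
    if "\<exists>u. x = V u \<and> y = W u" "\<exists>u. u' = V u \<and> v = W u" for x y u' v
    using that clinear_add[OF clinear_V] clinear_add[OF clinear_W] by metis
  show "\<exists>u. c *\<^sub>C x = V u \<and> c *\<^sub>C y = W u" if "\<exists>u. x = V u \<and> y = W u" for c x y
    using that clinear_scaleC[OF clinear_V] clinear_scaleC[OF clinear_W] by metis
  show "y = 0" if "\<exists>u. 0 = V u \<and> y = W u" for y
    using that V_eq_zeroD clinear_zero[OF clinear_W] by metis
qed

lemma op_dom_modulus: "op_dom modulus = range V"
  by (auto simp: op_dom_iff modulus_iff)

lemma dense_range_V: "dense_set (range V)"
proof (rule dense_if_orthogonal_complement_zero)
  have "V a + V b \<in> range V" "c *\<^sub>C V a \<in> range V" "0 \<in> range V" for a b c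
    using clinear_add[OF clinear_V, of a b] clinear_scaleC[OF clinear_V, of c a]
      clinear_zero[OF clinear_V] by (metis rangeI)+
  then show "csubspace (range V)" unfolding csubspace_def by blast
  fix h assume "\<And>m. m \<in> range V \<Longrightarrow> cinner m h = 0"
  then have "cinner u (V h) = 0" for u using hermitian_V by (metis hermitian_def rangeI)
  then show "h = 0" using V_eq_zeroD cinner_eq_zero_iff by blast
qed

lemma adjoint_modulus: "adjoint modulus = modulus"
proof
  show "modulus \<subseteq> adjoint modulus"
  proof (clarsimp simp: modulus_iff adjoint_iff)
    fix u u'
    have "cinner (W u) (V u') = cinner u (W (V u'))" using hermitian_W by (simp add: hermitian_def)
    also have "\<dots> = cinner (V u) (W u')" using hermitian_V by (simp add: W_V hermitian_def)
    finally show "cinner (W u) (V u') = cinner (V u) (W u')" .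
  qed
  show "adjoint modulus \<subseteq> modulus"
  proof (clarify)
    fix y z assume "(y, z) \<in> adjoint modulus"
    then have "cinner (W u) y = cinner (V u) z" for u by (auto simp: adjoint_iff modulus_iff)
    then have "cinner u (W y) = cinner u (V z)" for u
      using hermitian_W hermitian_V by (simp add: hermitian_def)
    then have wy: "W y = V z" by (metis cinner_commute cinner_ext)
    define u where "u = V y + W z"
    have "y = V (V y) + W (W y)" by (simp add: V_V W_W)
    also have "\<dots> = V u" by (simp add: u_def wy clinear_add[OF clinear_V] W_V)
    finally have "y = V u" .
    moreover have "W u = z"
      by (simp add: u_def clinear_add[OF clinear_W] W_V W_W wy V_V)
    ultimately show "(y, z) \<in> modulus" by (auto simp: modulus_iff)
  qed
qed

lemma closed_modulus: "closed modulus"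
  using closed_adjoint[of modulus] adjoint_modulus by simp

lemma self_adjoint_modulus: "self_adjoint modulus"
  unfolding self_adjoint_def densely_defined_def
  using is_operator_modulus adjoint_modulus op_dom_modulus dense_range_V by simp

lemma positive_modulus: "positive_op modulus"
  unfolding positive_op_def
proof (intro allI impI)
  fix x z assume "(x, z) \<in> modulus"
  then obtain u where u: "x = V u" "z = W u" by (auto simp: modulus_iff)
  have "cinner (W u) (V u) = cinner (W u) (V4 (V4 u))" using is_sqrt_V4 by (simp add: is_sqrt_def)
  also have "\<dots> = cinner (W (V4 u)) (V4 u)"
    using is_sqrt_V4 by (simp add: is_sqrt_def hermitian_def W_V4)
  finally have "cinner z x = cinner (W (V4 u)) (V4 u)" using u by simp
  then show "Im (cinner z x) = 0 \<and> 0 \<le> Re (cinner z x)"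
    using hermitian_Im_cinner_zero[OF hermitian_W] Re_cinner_W_nonneg by simp
qed

lemma norm_W_V: "norm (W (V v)) = norm (AR v)"
proof -
  have V_adj: "cinner (V x) y = cinner x (V y)" for x y using hermitian_V by (simp add: hermitian_def)
  have R_adj: "cinner (R x) y = cinner x (R y)" for x y using hermitian_R by (simp add: hermitian_def)
  have "cinner (W (V v)) (W (V v)) = cinner (W (W (V v))) (V v)"
    using hermitian_W by (simp add: hermitian_def)
  also have "\<dots> = cinner (V v) (V v) - cinner (R (V v)) (V v)"
    by (simp add: W_W cinner_diff_left)
  also have "cinner (V v) (V v) = cinner (R v) v"
    by (simp add: V_adj V_V R_adj)
  also have "cinner (R (V v)) (V v) = cinner (R (R v)) v"
    by (simp add: R_V V_adj V_V R_adj)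
  finally have "complex_of_real ((norm (W (V v)))\<^sup>2) = complex_of_real ((norm (AR v))\<^sup>2)"
    unfolding norm_AR_sq cinner_self_norm .
  then have "(norm (W (V v)))\<^sup>2 = (norm (AR v))\<^sup>2" by (simp only: of_real_eq_iff)
  then show ?thesis by (simp add: power2_eq_iff_nonneg)
qed

lemma dist_W_V_eq: "dist (W (V v)) (W (V v')) = dist (AR v) (AR v')"
  using norm_W_V[of "v - v'"]
  by (simp add: dist_norm clinear_diff[OF clinear_AR] clinear_diff[OF clinear_V] clinear_diff[OF clinear_W])

lemma graph_A_V: "\<exists>y. (V u, y) \<in> A \<and> norm y = norm (W u)"
proof -
  have "u \<in> closure (range V)" using dense_range_V by (simp add: dense_set_def)
  then obtain f where f: "\<And>n. f n \<in> range V" "f \<longlonglongrightarrow> u"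
    unfolding closure_sequential by blast
  have "\<forall>n. \<exists>w. f n = V w" using f(1) by blast
  then obtain v where "\<And>n. f n = V (v n)" by metis
  then have "f = (\<lambda>n. V (v n))" by auto
  then have Vv: "(\<lambda>n. V (v n)) \<longlonglongrightarrow> u" using f(2) by simp
  have Rv: "(\<lambda>n. R (v n)) \<longlonglongrightarrow> V u"
    using clinear_bounded_tendsto[OF clinear_V norm_V_le Vv] by (simp add: V_V)
  have WVv: "(\<lambda>n. W (V (v n))) \<longlonglongrightarrow> W u" by (rule clinear_bounded_tendsto[OF clinear_W norm_W_le Vv])
  have "Cauchy (\<lambda>n. AR (v n))"
    by (rule Cauchy_if_dist_eq_convergent[OF convergentI[OF WVv]]) (simp add: dist_W_V_eq)
  then obtain y where y: "(\<lambda>n. AR (v n)) \<longlonglongrightarrow> y" using Cauchy_convergent_iff convergent_def by blast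
  have "(V u, y) \<in> A"
    by (rule closed_sequentially[OF closed_A R_AR_graph tendsto_Pair[OF Rv y]])
  moreover have "norm y = norm (W u)"
  proof (rule LIMSEQ_unique)
    show "(\<lambda>n. norm (AR (v n))) \<longlonglongrightarrow> norm y" by (rule tendsto_norm[OF y])
    show "(\<lambda>n. norm (AR (v n))) \<longlonglongrightarrow> norm (W u)" using tendsto_norm[OF WVv] by (simp add: norm_W_V)
  qed
  ultimately show ?thesis by blast
qed

lemma graph_A_subset_closure_R_AR: "A \<subseteq> closure (range (\<lambda>v. (R v, AR v)))"
proof (clarify)
  fix x y assume xy: "(x, y) \<in> A"
  define G where "G = range (\<lambda>v. (R v, AR v))"
  have RAR_G: "(R v, AR v) \<in> closure G" for v
  proof -
    have "(R v, AR v) \<in> G" unfolding G_def by (rule rangeI)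
    then show ?thesis using closure_subset by blast
  qed
  have Gadd: "(a + c, b + d) \<in> G" if ab: "(a, b) \<in> G" "(c, d) \<in> G" for a b c d
  proof -
    obtain h g where "a = R h" "b = AR h" "c = R g" "d = AR g" using ab by (auto simp: G_def)
    then show ?thesis
      by (auto simp: G_def clinear_add[OF clinear_R, symmetric] clinear_add[OF clinear_AR, symmetric])
  qed
  have Gsc: "(e *\<^sub>C a, e *\<^sub>C b) \<in> G" if ab: "(a, b) \<in> G" for e a b
  proof -
    obtain h where "a = R h" "b = AR h" using ab by (auto simp: G_def)
    then show ?thesis
      by (auto simp: G_def clinear_scaleC[OF clinear_R, symmetric] clinear_scaleC[OF clinear_AR, symmetric])
  qed
  have "(0, 0) \<in> closure G"
    using RAR_G[of 0] clinear_zero[OF clinear_R] clinear_zero[OF clinear_AR] by simp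
  then obtain p q where pq: "(p, q) \<in> closure G"
    and orth: "\<And>s t. (s, t) \<in> closure G \<Longrightarrow> cinner (x - p) s + cinner (y - q) t = 0"
    using graph_projection_exists[OF closed_closure _ closure_graph_add[OF Gadd] closure_graph_scaleC[OF Gsc], of x y]
    by blast
  have "G \<subseteq> A" using R_AR_graph by (auto simp: G_def)
  then have "closure G \<subseteq> A" by (rule closure_minimal[OF _ closed_A])
  then have dA: "(x - p, y - q) \<in> A" using op_diff[OF is_operator_A xy] pq by blast
  have "cinner (x - p) v = 0" for v
  proof -
    have "cinner (x - p) (R v) + cinner (y - q) (AR v) = 0" by (rule orth[OF RAR_G])
    moreover have "cinner (y - q) (AR v) = cinner (x - p) (v - R v)" by (rule cinner_AR[OF dA])
    ultimately show ?thesis by (simp add: cinner_diff_right)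
  qed
  then have "x = p" using cinner_eq_zero_iff[of "x - p"] by simp
  moreover from this have "y = q" using dA op_value_zero[OF is_operator_A, of "y - q"] by simp
  ultimately show "(x, y) \<in> closure G" using pq by simp
qed

lemma op_dom_A_subset: "op_dom A \<subseteq> range V"
proof (clarsimp simp: op_dom_iff)
  fix x y assume "(x, y) \<in> A"
  then have "(x, y) \<in> closure (range (\<lambda>v. (R v, AR v)))" using graph_A_subset_closure_R_AR by blast
  then obtain f where f: "\<And>n. f n \<in> range (\<lambda>v. (R v, AR v))" "f \<longlonglongrightarrow> (x, y)"
    unfolding closure_sequential by blast
  have "\<forall>n. \<exists>w. f n = (R w, AR w)" using f(1) by blast
  then obtain v where v: "\<And>n. f n = (R (v n), AR (v n))" by metis
  have fx: "(\<lambda>n. R (v n)) \<longlonglongrightarrow> x" using tendsto_fst[OF f(2)] v by simp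
  have fy: "(\<lambda>n. AR (v n)) \<longlonglongrightarrow> y" using tendsto_snd[OF f(2)] v by simp
  have "Cauchy (\<lambda>n. W (V (v n)))"
    by (rule Cauchy_if_dist_eq_convergent[OF convergentI[OF fy]]) (simp add: dist_W_V_eq)
  then obtain z where z: "(\<lambda>n. W (V (v n))) \<longlonglongrightarrow> z" using Cauchy_convergent_iff convergent_def by blast
  have "(R (v n), W (V (v n))) \<in> modulus" for n by (auto simp: modulus_iff V_V[symmetric])
  then have "(x, z) \<in> modulus" by (rule closed_sequentially[OF closed_modulus _ tendsto_Pair[OF fx z]])
  then show "x \<in> range V" by (auto simp: modulus_iff)
qed

lemma op_dom_modulus_eq: "op_dom modulus = op_dom A"
proof
  show "op_dom A \<subseteq> op_dom modulus" using op_dom_A_subset by (simp add: op_dom_modulus)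
  show "op_dom modulus \<subseteq> op_dom A" using graph_A_V by (force simp: op_dom_modulus op_dom_iff)
qed

lemma norm_modulus_eq: "(x, y) \<in> A \<Longrightarrow> (x, z) \<in> modulus \<Longrightarrow> norm z = norm y"
  using graph_A_V op_value_unique[OF is_operator_A] by (metis modulus_iff)

end

theorem modulus_exists:
  fixes A :: "'a::chilbert_space lop"
  assumes "closed_operator A" "densely_defined A"
  shows "\<exists>S. self_adjoint S \<and> positive_op S \<and> closed S \<and> op_dom S = op_dom A
    \<and> (\<forall>x y z. (x, y) \<in> A \<longrightarrow> (x, z) \<in> S \<longrightarrow> norm z = norm y)"
proof -
  interpret closed_densely_defined A using assms by unfold_locales
  show ?thesis
    using self_adjoint_modulus positive_modulus closed_modulus op_dom_modulus_eq norm_modulus_eq by blast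
qed

section \<open>Orthonormal sequences\<close>

definition orthonormal :: "(nat \<Rightarrow> 'a::complex_inner) \<Rightarrow> bool" where
  "orthonormal e \<longleftrightarrow> (\<forall>n m. cinner (e n) (e m) = (if n = m then 1 else 0))"

lemma orthonormal_sum_cinner:
  assumes o: "orthonormal e" and F: "finite F"
  shows "cinner (\<Sum>n\<in>F. c n *\<^sub>C e n) (e m) = (if m \<in> F then c m else 0)"
proof -
  have "cinner (\<Sum>n\<in>F. c n *\<^sub>C e n) (e m) = (\<Sum>n\<in>F. c n * (if n = m then 1 else 0))"
    using o by (simp add: cinner_sum_left cinner_scaleC_left orthonormal_def)
  also have "\<dots> = (\<Sum>n\<in>F. if n = m then c n else 0)" by (rule sum.cong) auto
  also have "\<dots> = (if m \<in> F then c m else 0)" using F by (simp add: sum.delta')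
  finally show ?thesis .
qed

lemma orthonormal_sum_norm_sq:
  assumes o: "orthonormal e" and F: "finite F"
  shows "(norm (\<Sum>n\<in>F. c n *\<^sub>C e n))\<^sup>2 = (\<Sum>n\<in>F. (cmod (c n))\<^sup>2)"
proof -
  have "cinner (\<Sum>n\<in>F. c n *\<^sub>C e n) (\<Sum>n\<in>F. c n *\<^sub>C e n)
      = (\<Sum>m\<in>F. cnj (c m) * cinner (\<Sum>n\<in>F. c n *\<^sub>C e n) (e m))"
    by (simp add: cinner_sum_right cinner_scaleC_right)
  also have "\<dots> = (\<Sum>m\<in>F. cnj (c m) * c m)"
    by (rule sum.cong) (auto simp: orthonormal_sum_cinner[OF o F])
  also have "\<dots> = (\<Sum>m\<in>F. complex_of_real ((cmod (c m))\<^sup>2))"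
    by (rule sum.cong) (simp_all only: complex_norm_square mult.commute)
  finally have "complex_of_real ((norm (\<Sum>n\<in>F. c n *\<^sub>C e n))\<^sup>2) = complex_of_real (\<Sum>m\<in>F. (cmod (c m))\<^sup>2)"
    by (simp add: cinner_self_norm)
  then show ?thesis using of_real_eq_iff by blast
qed

lemma orthonormal_summable:
  fixes e :: "nat \<Rightarrow> 'a::chilbert_space"
  assumes o: "orthonormal e" and c: "summable (\<lambda>n. (cmod (c n))\<^sup>2)"
  shows "summable (\<lambda>n. c n *\<^sub>C e n)"
  unfolding summable_Cauchy
proof (intro allI impI)
  fix r :: real assume r: "r > 0"
  obtain N where N: "\<And>m n. m \<ge> N \<Longrightarrow> norm (\<Sum>k\<in>{m..<n}. (cmod (c k))\<^sup>2) < r\<^sup>2"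
    using c[unfolded summable_Cauchy] r by (meson zero_less_power)
  have "norm (\<Sum>k\<in>{m..<n}. c k *\<^sub>C e k) < r" if "m \<ge> N" for m n
  proof -
    have "(norm (\<Sum>k\<in>{m..<n}. c k *\<^sub>C e k))\<^sup>2 = (\<Sum>k\<in>{m..<n}. (cmod (c k))\<^sup>2)"
      by (rule orthonormal_sum_norm_sq[OF o]) simp
    also have "\<dots> < r\<^sup>2" using N[OF that, of n] by (simp add: sum_nonneg)
    finally show ?thesis using r by (simp add: power_less_imp_less_base)
  qed
  then show "\<exists>N. \<forall>m\<ge>N. \<forall>n. norm (\<Sum>k\<in>{m..<n}. c k *\<^sub>C e k) < r" by blast
qed

lemma orthonormal_sums_coeff:
  fixes e :: "nat \<Rightarrow> 'a::chilbert_space"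
  assumes o: "orthonormal e" and s: "(\<lambda>n. c n *\<^sub>C e n) sums w"
  shows "cinner w (e m) = c m"
proof -
  have "(\<lambda>n. cinner (c n *\<^sub>C e n) (e m)) sums cinner w (e m)" by (rule sums_cinner_left[OF s])
  moreover have "(\<lambda>n. cinner (c n *\<^sub>C e n) (e m)) = (\<lambda>n. if n = m then c n else 0)"
    using o by (auto simp: cinner_scaleC_left orthonormal_def)
  ultimately show ?thesis using sums_single[of m c] sums_unique2 by metis
qed

lemma orthonormal_sums_cinner:
  fixes e :: "nat \<Rightarrow> 'a::chilbert_space"
  assumes o: "orthonormal e" and s: "(\<lambda>n. c n *\<^sub>C e n) sums w" and t: "(\<lambda>n. d n *\<^sub>C e n) sums v"
  shows "(\<lambda>n. c n * cnj (d n)) sums cinner w v"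
proof -
  have "cinner (c n *\<^sub>C e n) v = c n * cnj (d n)" for n
    using orthonormal_sums_coeff[OF o t, of n] cinner_commute[of "e n" v] by (simp add: cinner_scaleC_left)
  then show ?thesis using sums_cinner_left[OF s, of v] by simp
qed

lemma orthonormal_sums_norm_sq:
  fixes e :: "nat \<Rightarrow> 'a::chilbert_space"
  assumes o: "orthonormal e" and s: "(\<lambda>n. c n *\<^sub>C e n) sums w"
  shows "(\<lambda>n. (cmod (c n))\<^sup>2) sums (norm w)\<^sup>2"
proof -
  have "(\<lambda>n. complex_of_real ((cmod (c n))\<^sup>2)) sums complex_of_real ((norm w)\<^sup>2)"
    using orthonormal_sums_cinner[OF o s s] by (simp only: complex_norm_square cinner_self_norm)
  then show ?thesis by (simp only: sums_of_real_iff)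
qed

lemma orthonormal_sums_unique:
  fixes e :: "nat \<Rightarrow> 'a::chilbert_space"
  assumes o: "orthonormal e" and s: "(\<lambda>n. c n *\<^sub>C e n) sums w"
    and coeff: "\<And>n. cinner z (e n) = c n" and nz: "norm z = norm w"
  shows "z = w"
proof -
  have "(\<lambda>n. cinner z (c n *\<^sub>C e n)) sums cinner z w" by (rule sums_cinner_right[OF s])
  moreover have "cinner z (c n *\<^sub>C e n) = complex_of_real ((cmod (c n))\<^sup>2)" for n
    by (simp only: cinner_scaleC_right coeff complex_norm_square mult.commute)
  ultimately have "(\<lambda>n. complex_of_real ((cmod (c n))\<^sup>2)) sums cinner z w" by simp
  moreover have "(\<lambda>n. complex_of_real ((cmod (c n))\<^sup>2)) sums complex_of_real ((norm w)\<^sup>2)"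
    using orthonormal_sums_norm_sq[OF o s] by (simp only: sums_of_real_iff)
  ultimately have "cinner z w = complex_of_real ((norm w)\<^sup>2)" using sums_unique2 by blast
  then have "(norm (z - w))\<^sup>2 = 0" by (simp add: norm_diff_sq nz)
  then show ?thesis by simp
qed

function gram_schmidt :: "(nat \<Rightarrow> 'a::complex_inner) \<Rightarrow> nat \<Rightarrow> 'a" where
  "gram_schmidt v n = (let u = v n - (\<Sum>k\<in>{..<n}. cinner (v n) (gram_schmidt v k) *\<^sub>C gram_schmidt v k)
             in (1 / complex_of_real (norm u)) *\<^sub>C u)"
  by auto
termination by (relation "Wellfounded.measure snd") auto

declare gram_schmidt.simps [simp del]

definition gram_schmidt_residual :: "(nat \<Rightarrow> 'a::complex_inner) \<Rightarrow> nat \<Rightarrow> 'a" where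
  "gram_schmidt_residual v n = v n - (\<Sum>k<n. cinner (v n) (gram_schmidt v k) *\<^sub>C gram_schmidt v k)"

lemma gram_schmidt_eq:
  "gram_schmidt v n = (1 / complex_of_real (norm (gram_schmidt_residual v n))) *\<^sub>C gram_schmidt_residual v n"
  unfolding gram_schmidt_residual_def by (subst gram_schmidt.simps) (simp only: Let_def)

text \<open>Biorthogonality makes the \<open>\<psi>\<^sub>n\<close> linearly independent, so Gram-Schmidt never divides by zero.\<close>

lemma cinner_gram_schmidt_biorthogonal:
  assumes "biorthogonal \<phi> \<psi>" "k < j"
  shows "cinner (\<phi> j) (gram_schmidt \<psi> k) = 0"
  using assms(2)
proof (induction k arbitrary: j rule: less_induct)
  case (less k)
  have "cinner (\<phi> j) (\<psi> k) = 0" using assms(1) less.prems by (simp add: biorthogonal_def)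
  moreover have "cinner (\<phi> j) (gram_schmidt \<psi> i) = 0" if "i < k" for i
    using less.IH[OF that] less.prems that by simp
  ultimately show ?case
    by (subst gram_schmidt_eq) (simp add: gram_schmidt_residual_def cinner_scaleC_right
        cinner_diff_right cinner_sum_right)
qed

lemma gram_schmidt_residual_nonzero:
  assumes "biorthogonal \<phi> \<psi>"
  shows "gram_schmidt_residual \<psi> n \<noteq> 0"
proof -
  have "cinner (\<phi> n) (gram_schmidt_residual \<psi> n) = cinner (\<phi> n) (\<psi> n)"
    using cinner_gram_schmidt_biorthogonal[OF assms]
    by (simp add: gram_schmidt_residual_def cinner_diff_right cinner_sum_right cinner_scaleC_right)
  also have "\<dots> = 1" using assms by (simp add: biorthogonal_def)
  finally show ?thesis by auto
qed

lemma cinner_gram_schmidt_self: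
  assumes "biorthogonal \<phi> \<psi>"
  shows "cinner (gram_schmidt \<psi> n) (gram_schmidt \<psi> n) = 1"
  using gram_schmidt_residual_nonzero[OF assms, of n]
  by (simp add: cinner_self_norm gram_schmidt_eq[of \<psi> n] norm_scaleC norm_divide)

lemma cinner_gram_schmidt_earlier:
  assumes bio: "biorthogonal \<phi> \<psi>"
  shows "m < n \<Longrightarrow> cinner (gram_schmidt \<psi> n) (gram_schmidt \<psi> m) = 0"
proof (induction n arbitrary: m rule: less_induct)
  case (less n)
  let ?g = "gram_schmidt \<psi>"
  have o: "cinner (?g k) (?g m) = (if k = m then 1 else 0)" if "k < n" for k
    using less.IH[OF that, of m] less.IH[OF less.prems, of k] cinner_gram_schmidt_self[OF bio, of m]
      cinner_commute[of "?g k" "?g m"]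
    by (cases k m rule: linorder_cases) auto
  have "cinner (gram_schmidt_residual \<psi> n) (?g m)
      = cinner (\<psi> n) (?g m) - (\<Sum>k<n. if k = m then cinner (\<psi> n) (?g k) else 0)"
    by (simp add: gram_schmidt_residual_def cinner_diff_left cinner_sum_left cinner_scaleC_left o
        if_distrib cong: if_cong)
  also have "\<dots> = 0" using less.prems by (simp add: sum.delta')
  finally show ?case by (simp add: gram_schmidt_eq[of \<psi> n] cinner_scaleC_left)
qed

lemma orthonormal_gram_schmidt:
  assumes "biorthogonal \<phi> \<psi>"
  shows "orthonormal (gram_schmidt \<psi>)"
  unfolding orthonormal_def
proof (intro allI)
  fix n m
  show "cinner (gram_schmidt \<psi> n) (gram_schmidt \<psi> m) = (if n = m then 1 else 0)"
    using cinner_gram_schmidt_earlier[OF assms, of n m] cinner_gram_schmidt_earlier[OF assms, of m n]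
      cinner_gram_schmidt_self[OF assms, of n] cinner_commute[of "gram_schmidt \<psi> n" "gram_schmidt \<psi> m"]
    by (cases n m rule: linorder_cases) auto
qed

lemma csubspace_cspan: "csubspace (cspan X)"
proof -
  have "0 \<in> cspan X" unfolding cspan_def by (rule CollectI, rule exI[of _ "{}"]) auto
  moreover have "x + y \<in> cspan X" if xy: "x \<in> cspan X" "y \<in> cspan X" for x y
  proof -
    obtain F c where F: "finite F" "F \<subseteq> X" "x = (\<Sum>b\<in>F. c b *\<^sub>C b)" using xy(1) by (auto simp: cspan_def)
    obtain G d where G: "finite G" "G \<subseteq> X" "y = (\<Sum>b\<in>G. d b *\<^sub>C b)" using xy(2) by (auto simp: cspan_def)
    define c' where "c' b = (if b \<in> F then c b else 0)" for b
    define d' where "d' b = (if b \<in> G then d b else 0)" for b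
    have "x = (\<Sum>b\<in>F \<union> G. c' b *\<^sub>C b)"
      unfolding F(3) by (rule sum.mono_neutral_cong_left) (auto simp: F G c'_def)
    moreover have "y = (\<Sum>b\<in>F \<union> G. d' b *\<^sub>C b)"
      unfolding G(3) by (rule sum.mono_neutral_cong_left) (auto simp: F G d'_def)
    ultimately have "x + y = (\<Sum>b\<in>F \<union> G. (c' b + d' b) *\<^sub>C b)"
      by (simp add: sum.distrib scaleC_add_left)
    then show ?thesis unfolding cspan_def
      by (intro CollectI exI[of _ "F \<union> G"] exI[of _ "\<lambda>b. c' b + d' b"]) (use F G in auto)
  qed
  moreover have "a *\<^sub>C x \<in> cspan X" if xs: "x \<in> cspan X" for a x
  proof -
    obtain F c where F: "finite F" "F \<subseteq> X" "x = (\<Sum>b\<in>F. c b *\<^sub>C b)" using xs by (auto simp: cspan_def)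
    have "a *\<^sub>C x = (\<Sum>b\<in>F. (a * c b) *\<^sub>C b)" by (simp add: F(3) scaleC_sum_right)
    then show ?thesis unfolding cspan_def
      by (intro CollectI exI[of _ F] exI[of _ "\<lambda>b. a * c b"]) (use F in auto)
  qed
  ultimately show ?thesis unfolding csubspace_def by blast
qed

lemma cspan_superset: "X \<subseteq> cspan X"
proof
  fix x assume "x \<in> X"
  then show "x \<in> cspan X"
    unfolding cspan_def by (intro CollectI exI[of _ "{x}"] exI[of _ "\<lambda>_. 1"]) simp
qed

section \<open>Constructing pairs from a quasi-basis\<close>

locale quasi_basis_setting =
  fixes \<phi> \<psi> :: "nat \<Rightarrow> 'a::chilbert_space" and D E :: "'a set"
  assumes biorthogonal: "biorthogonal \<phi> \<psi>"
    and csubspace_D: "csubspace D" and dense_D: "dense_set D" and dense_E: "dense_set E"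
    and quasi_basis: "quasi_basis \<phi> \<psi> D E"
    and psi_in_D: "\<And>m. \<psi> m \<in> D" and D_subset: "D \<subseteq> seq_domain \<phi>"
    and E_subset: "E \<subseteq> seq_domain \<psi>"
begin

definition e :: "nat \<Rightarrow> 'a" where
  "e = gram_schmidt \<psi>"

lemma orthonormal_e: "orthonormal e"
  unfolding e_def by (rule orthonormal_gram_schmidt[OF biorthogonal])

definition T :: "'a \<Rightarrow> 'a" where
  "T x = (\<Sum>n. cinner x (\<phi> n) *\<^sub>C e n)"

lemma summable_coeffs: "x \<in> D \<Longrightarrow> summable (\<lambda>n. (cmod (cinner x (\<phi> n)))\<^sup>2)"
  using D_subset by (auto simp: seq_domain_def)

lemma T_sums: "x \<in> D \<Longrightarrow> (\<lambda>n. cinner x (\<phi> n) *\<^sub>C e n) sums T x"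
  unfolding T_def using orthonormal_summable[OF orthonormal_e summable_coeffs] summable_sums by blast

lemma cinner_T_e: "x \<in> D \<Longrightarrow> cinner (T x) (e m) = cinner x (\<phi> m)"
  by (rule orthonormal_sums_coeff[OF orthonormal_e T_sums])

definition A0 :: "'a lop" where
  "A0 = op_restrict (T_op e \<phi>) D"

lemma A0_iff: "(x, y) \<in> A0 \<longleftrightarrow> x \<in> D \<and> y = T x"
proof
  assume "(x, y) \<in> A0"
  then have "x \<in> D" "(\<lambda>n. cinner x (\<phi> n) *\<^sub>C e n) sums y"
    by (auto simp: A0_def op_restrict_def T_op_def)
  then show "x \<in> D \<and> y = T x" using T_sums sums_unique2 by blast
next
  assume "x \<in> D \<and> y = T x"
  then show "(x, y) \<in> A0" using T_sums D_subset by (auto simp: A0_def op_restrict_def T_op_def)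
qed

lemma A0_add: "(x, y) \<in> A0 \<Longrightarrow> (u, v) \<in> A0 \<Longrightarrow> (x + u, y + v) \<in> A0"
proof -
  assume "(x, y) \<in> A0" "(u, v) \<in> A0"
  then have xu: "x \<in> D" "u \<in> D" and yv: "y = T x" "v = T u" by (auto simp: A0_iff)
  have "(\<lambda>n. cinner (x + u) (\<phi> n) *\<^sub>C e n) sums (T x + T u)"
    using sums_add[OF T_sums[OF xu(1)] T_sums[OF xu(2)]] by (simp add: cinner_add_left scaleC_add_left)
  moreover have "x + u \<in> D" using csubspace_D xu by (simp add: csubspace_def)
  ultimately show ?thesis using T_sums sums_unique2 yv by (metis A0_iff)
qed

lemma A0_scaleC: "(x, y) \<in> A0 \<Longrightarrow> (c *\<^sub>C x, c *\<^sub>C y) \<in> A0"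
proof -
  assume "(x, y) \<in> A0"
  then have xD: "x \<in> D" and y: "y = T x" by (auto simp: A0_iff)
  have "(\<lambda>n. cinner (c *\<^sub>C x) (\<phi> n) *\<^sub>C e n) sums (c *\<^sub>C T x)"
    using sums_scaleC[OF T_sums[OF xD], of c] by (simp add: cinner_scaleC_left)
  moreover have "c *\<^sub>C x \<in> D" using csubspace_D xD by (simp add: csubspace_def)
  ultimately show ?thesis using T_sums sums_unique2 y by (metis A0_iff)
qed

lemma psi_e_A0: "(\<psi> m, e m) \<in> A0"
proof -
  have "cinner (\<psi> m) (\<phi> n) = (if n = m then 1 else 0)" for n
    using biorthogonal cinner_commute[of "\<psi> m" "\<phi> n"] by (simp add: biorthogonal_def)
  then have "(\<lambda>n. cinner (\<psi> m) (\<phi> n) *\<^sub>C e n) = (\<lambda>n. if n = m then e n else 0)" by auto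
  then have "(\<lambda>n. cinner (\<psi> m) (\<phi> n) *\<^sub>C e n) sums e m" using sums_single[of m e] by simp
  then show ?thesis using T_sums[OF psi_in_D] sums_unique2 psi_in_D by (metis A0_iff)
qed

definition A :: "'a lop" where
  "A = closure A0"

lemma A0_subset_A: "A0 \<subseteq> A"
  unfolding A_def by (rule closure_subset)

lemma A_limit:
  assumes "(x, y) \<in> A"
  obtains xs where "\<And>k. xs k \<in> D" "xs \<longlonglongrightarrow> x" "(\<lambda>k. T (xs k)) \<longlonglongrightarrow> y"
proof -
  obtain g where g: "\<And>k. g k \<in> A0" "g \<longlonglongrightarrow> (x, y)"
    using assms unfolding A_def closure_sequential by blast
  have "fst (g k) \<in> D" "snd (g k) = T (fst (g k))" for k
    using A0_iff[of "fst (g k)" "snd (g k)"] g(1)[of k] by auto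
  moreover have "(\<lambda>k. fst (g k)) \<longlonglongrightarrow> x" "(\<lambda>k. snd (g k)) \<longlonglongrightarrow> y"
    using tendsto_fst[OF g(2)] tendsto_snd[OF g(2)] by simp_all
  ultimately show ?thesis using that[of "\<lambda>k. fst (g k)"] by simp
qed

lemma cinner_A_e: "(x, y) \<in> A \<Longrightarrow> cinner y (e m) = cinner x (\<phi> m)"
proof -
  assume "(x, y) \<in> A"
  then obtain xs where xs: "\<And>k. xs k \<in> D" "xs \<longlonglongrightarrow> x" "(\<lambda>k. T (xs k)) \<longlonglongrightarrow> y"
    by (rule A_limit) blast
  have "(\<lambda>k. cinner (T (xs k)) (e m)) \<longlonglongrightarrow> cinner y (e m)" by (intro tendsto_intros xs)
  moreover have "(\<lambda>k. cinner (xs k) (\<phi> m)) \<longlonglongrightarrow> cinner x (\<phi> m)" by (intro tendsto_intros xs)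
  then have "(\<lambda>k. cinner (T (xs k)) (e m)) \<longlonglongrightarrow> cinner x (\<phi> m)" by (simp add: cinner_T_e xs(1))
  ultimately show ?thesis by (rule LIMSEQ_unique)
qed

lemma A_value_zero:
  assumes "(0, y) \<in> A"
  shows "y = 0"
proof -
  obtain xs where xs: "\<And>k. xs k \<in> D" "xs \<longlonglongrightarrow> 0" "(\<lambda>k. T (xs k)) \<longlonglongrightarrow> y"
    using assms by (rule A_limit) blast
  have "cinner (T (xs k)) y = 0" for k
  proof -
    have "(\<lambda>n. cinner (cinner (xs k) (\<phi> n) *\<^sub>C e n) y) sums cinner (T (xs k)) y"
      by (rule sums_cinner_left[OF T_sums[OF xs(1)]])
    moreover have "cinner (cinner (xs k) (\<phi> n) *\<^sub>C e n) y = 0" for n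
      using cinner_A_e[OF assms, of n] cinner_commute[of "e n" y] by (simp add: cinner_scaleC_left)
    ultimately show ?thesis using sums_unique2[OF _ sums_zero] by simp
  qed
  then have "(\<lambda>k. cinner (T (xs k)) y) \<longlonglongrightarrow> 0" by simp
  moreover have "(\<lambda>k. cinner (T (xs k)) y) \<longlonglongrightarrow> cinner y y" by (intro tendsto_intros xs)
  ultimately have "0 = cinner y y" by (rule LIMSEQ_unique)
  then show ?thesis using cinner_eq_zero_iff by metis
qed

lemma is_operator_A: "is_operator A"
  unfolding is_operator_def
proof (intro conjI allI impI)
  have "0 \<in> D" "T 0 = 0" using csubspace_D by (simp_all add: csubspace_def T_def)
  then have "(0, 0) \<in> A0" by (simp add: A0_iff)
  then show "(0, 0) \<in> A" using A0_subset_A by blast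
  show "(x + u, y + v) \<in> A" if "(x, y) \<in> A" "(u, v) \<in> A" for x y u v
    using closure_graph_add[of A0 x y u v] A0_add that unfolding A_def by blast
  show "(c *\<^sub>C x, c *\<^sub>C y) \<in> A" if "(x, y) \<in> A" for c x y
    using closure_graph_scaleC[of A0 x y c] A0_scaleC that unfolding A_def by blast
  show "y = 0" if "(0, y) \<in> A" for y
    using that by (rule A_value_zero)
qed

lemma closed_operator_A: "closed_operator A"
  using is_operator_A by (simp add: closed_operator_def A_def)

lemma D_subset_op_dom_A: "D \<subseteq> op_dom A"
proof
  fix x assume "x \<in> D"
  then have "(x, T x) \<in> A0" by (simp add: A0_iff)
  then have "(x, T x) \<in> A" using A0_subset_A by blast
  then show "x \<in> op_dom A" by (auto simp: op_dom_iff)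
qed

lemma densely_defined_A: "densely_defined A"
  using closure_mono[OF D_subset_op_dom_A] dense_D by (auto simp: densely_defined_def dense_set_def)

text \<open>This is the only place where the quasi-basis property is used: for \<open>x \<in> D\<close>, \<open>w \<in> E\<close> it reads
  \<open>\<langle>x, w\<rangle> = \<langle>T x, T' w\<rangle>\<close> with \<open>T' w = \<Sum> \<langle>w, \<psi>\<^sub>n\<rangle> e\<^sub>n\<close>, and this identity passes to the closure.\<close>

lemma A_injective:
  assumes "(x, 0) \<in> A"
  shows "x = 0"
proof (rule dense_orthogonal_zero[OF dense_E])
  fix w assume wE: "w \<in> E"
  have ws: "summable (\<lambda>n. (cmod (cinner w (\<psi> n)))\<^sup>2)" using E_subset wE by (auto simp: seq_domain_def)
  obtain uw where uw: "(\<lambda>n. cinner w (\<psi> n) *\<^sub>C e n) sums uw"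
    using summable_sums[OF orthonormal_summable[OF orthonormal_e ws]] by blast
  have key: "cinner x' w = cinner (T x') uw" if xD: "x' \<in> D" for x'
  proof -
    have "(\<lambda>k. cinner x' (\<phi> k) * cinner (\<psi> k) w) sums cinner x' w"
      using quasi_basis xD wE by (simp add: quasi_basis_def)
    moreover have "(\<lambda>n. cinner x' (\<phi> n) * cnj (cinner w (\<psi> n))) sums cinner (T x') uw"
      by (rule orthonormal_sums_cinner[OF orthonormal_e T_sums[OF xD] uw])
    moreover have "cnj (cinner w (\<psi> n)) = cinner (\<psi> n) w" for n
      using cinner_commute[of "\<psi> n" w] by simp
    ultimately show ?thesis using sums_unique2 by simp
  qed
  obtain xs where xs: "\<And>k. xs k \<in> D" "xs \<longlonglongrightarrow> x" "(\<lambda>k. T (xs k)) \<longlonglongrightarrow> 0"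
    using assms by (rule A_limit) blast
  have "(\<lambda>k. cinner (xs k) w) \<longlonglongrightarrow> cinner x w" by (intro tendsto_intros xs)
  moreover have "(\<lambda>k. cinner (T (xs k)) uw) \<longlonglongrightarrow> cinner 0 uw" by (intro tendsto_intros xs)
  then have "(\<lambda>k. cinner (xs k) w) \<longlonglongrightarrow> 0" by (simp add: key xs(1))
  ultimately have "cinner x w = 0" by (rule LIMSEQ_unique)
  then show "cinner w x = 0" using cinner_commute[of w x] by simp
qed

definition S :: "'a lop" where
  "S = (SOME S. self_adjoint S \<and> positive_op S \<and> closed S \<and> op_dom S = op_dom A
    \<and> (\<forall>x y z. (x, y) \<in> A \<longrightarrow> (x, z) \<in> S \<longrightarrow> norm z = norm y))"

lemma S_props: "self_adjoint S \<and> positive_op S \<and> closed S \<and> op_dom S = op_dom A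
    \<and> (\<forall>x y z. (x, y) \<in> A \<longrightarrow> (x, z) \<in> S \<longrightarrow> norm z = norm y)"
  unfolding S_def by (rule someI_ex[OF modulus_exists[OF closed_operator_A densely_defined_A]])

lemma self_adjoint_S: "self_adjoint S" and positive_S: "positive_op S" and closed_S: "closed S"
  and op_dom_S: "op_dom S = op_dom A"
  and norm_S_eq: "(x, y) \<in> A \<Longrightarrow> (x, z) \<in> S \<Longrightarrow> norm z = norm y"
  using S_props by blast+

lemma is_operator_S: "is_operator S"
  using self_adjoint_S by (simp add: self_adjoint_def)

lemma adjoint_S: "adjoint S = S"
  using self_adjoint_S by (simp add: self_adjoint_def)

lemma densely_defined_S: "densely_defined S"
  using self_adjoint_S by (simp add: self_adjoint_def)

lemma S_injective: "(x, 0) \<in> S \<Longrightarrow> x = 0"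
  using op_dom_S norm_S_eq A_injective by (fastforce simp: op_dom_iff)

lemma D_subset_op_dom_S: "x \<in> D \<Longrightarrow> \<exists>z. (x, z) \<in> S"
  using D_subset_op_dom_A op_dom_S by (auto simp: op_dom_iff)

definition f :: "nat \<Rightarrow> 'a" where
  "f m = (SOME z. (\<psi> m, z) \<in> S)"

lemma psi_f_S: "(\<psi> m, f m) \<in> S"
  unfolding f_def using D_subset_op_dom_S[OF psi_in_D] by (rule someI_ex)

lemma cinner_S: "(x, y) \<in> A \<Longrightarrow> (x', y') \<in> A \<Longrightarrow> (x, z) \<in> S \<Longrightarrow> (x', z') \<in> S
    \<Longrightarrow> cinner z z' = cinner y y'"
  by (rule cinner_eq_if_norm_eq[OF is_operator_A is_operator_S norm_S_eq])

lemma psi_e_A: "(\<psi> m, e m) \<in> A"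
  using A0_subset_A psi_e_A0 by blast

lemma cinner_S_f: "(x, y) \<in> A \<Longrightarrow> (x, z) \<in> S \<Longrightarrow> cinner z (f m) = cinner y (e m)"
  using cinner_S[OF _ psi_e_A _ psi_f_S] by blast

lemma orthonormal_f: "orthonormal f"
  using cinner_S_f[OF psi_e_A psi_f_S] orthonormal_e by (simp add: orthonormal_def)

lemma cinner_S_f_coeff: "(x, z) \<in> S \<Longrightarrow> cinner z (f m) = cinner x (\<phi> m)"
  using op_dom_S cinner_S_f cinner_A_e by (fastforce simp: op_dom_iff)

lemma S_sums: "x \<in> D \<Longrightarrow> (x, z) \<in> S \<Longrightarrow> (\<lambda>n. cinner x (\<phi> n) *\<^sub>C f n) sums z"
proof -
  assume xD: "x \<in> D" and xz: "(x, z) \<in> S"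
  obtain w where w: "(\<lambda>n. cinner x (\<phi> n) *\<^sub>C f n) sums w"
    using orthonormal_summable[OF orthonormal_f summable_coeffs[OF xD]] summable_sums by blast
  have "(norm w)\<^sup>2 = (norm (T x))\<^sup>2"
    using orthonormal_sums_norm_sq[OF orthonormal_f w] orthonormal_sums_norm_sq[OF orthonormal_e T_sums[OF xD]]
    by (rule sums_unique2)
  moreover have "norm z = norm (T x)"
    using norm_S_eq subsetD[OF A0_subset_A] A0_iff xD xz by blast
  ultimately have "norm z = norm w" by (simp add: power2_eq_iff_nonneg)
  then have "z = w" by (rule orthonormal_sums_unique[OF orthonormal_f w cinner_S_f_coeff[OF xz]])
  with w show ?thesis by simp
qed

text \<open>Approximations in the graph of \<open>A\<close> carry over to \<open>S\<close> because the two graphs are isometric.\<close>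

lemma S_core:
  assumes xz: "(x, z) \<in> S"
  shows "\<exists>g. (\<forall>k. fst (g k) \<in> D \<and> g k \<in> S) \<and> g \<longlonglongrightarrow> (x, z)"
proof -
  have "x \<in> op_dom A" using xz op_dom_S op_dom_iff by metis
  then obtain y where xy: "(x, y) \<in> A" unfolding op_dom_iff by blast
  obtain xs where xs: "\<And>k. xs k \<in> D" "xs \<longlonglongrightarrow> x" "(\<lambda>k. T (xs k)) \<longlonglongrightarrow> y"
    using xy by (rule A_limit) blast
  have xsA: "(xs k, T (xs k)) \<in> A" for k using xs(1) A0_subset_A A0_iff by blast
  obtain zs where zs: "\<And>k. (xs k, zs k) \<in> S" using D_subset_op_dom_S[OF xs(1)] by metis
  have "dist (zs m) (zs n) = dist (T (xs m)) (T (xs n))" for m n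
    using norm_S_eq[OF op_diff[OF is_operator_A xsA xsA] op_diff[OF is_operator_S zs zs]]
    by (simp add: dist_norm)
  then have "Cauchy zs" by (rule Cauchy_if_dist_eq_convergent[OF convergentI[OF xs(3)]])
  then obtain w where zw: "zs \<longlonglongrightarrow> w" using Cauchy_convergent_iff convergent_def by blast
  have "(x, w) \<in> S" by (rule closed_sequentially[OF closed_S zs tendsto_Pair[OF xs(2) zw]])
  then have "w = z" by (rule op_value_unique[OF is_operator_S _ xz])
  then show ?thesis using tendsto_Pair[OF xs(2) zw] xs(1) zs
    by (intro exI[of _ "\<lambda>k. (xs k, zs k)"]) auto
qed

lemma restrict_T_op_f_eq: "op_restrict (T_op f \<phi>) D = op_restrict S D"
proof (intro set_eqI iffI)
  fix p assume "p \<in> op_restrict (T_op f \<phi>) D"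
  then obtain x y where p: "p = (x, y)" and xD: "x \<in> D" and s: "(\<lambda>n. cinner x (\<phi> n) *\<^sub>C f n) sums y"
    by (auto simp: op_restrict_def T_op_def)
  obtain z where xz: "(x, z) \<in> S" using D_subset_op_dom_S[OF xD] by blast
  have "y = z" using sums_unique2[OF s S_sums[OF xD xz]] .
  then show "p \<in> op_restrict S D" using p xz xD by (simp add: op_restrict_def)
next
  fix p assume "p \<in> op_restrict S D"
  then show "p \<in> op_restrict (T_op f \<phi>) D"
    using S_sums D_subset by (auto simp: op_restrict_def T_op_def)
qed

lemma closure_restrict_T_op_f: "op_closure (op_restrict (T_op f \<phi>) D) = S"
proof -
  have "closure (op_restrict S D) = S"
  proof
    show "closure (op_restrict S D) \<subseteq> S"
      by (rule closure_minimal[OF _ closed_S]) (auto simp: op_restrict_def)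
    show "S \<subseteq> closure (op_restrict S D)"
    proof (clarify)
      fix x z assume "(x, z) \<in> S"
      then obtain g where g: "\<And>k. fst (g k) \<in> D \<and> g k \<in> S" "g \<longlonglongrightarrow> (x, z)" using S_core by blast
      have "g k \<in> op_restrict S D" for k using g(1)[of k] by (cases "g k") (auto simp: op_restrict_def)
      then show "(x, z) \<in> closure (op_restrict S D)" unfolding closure_sequential using g(2) by blast
    qed
  qed
  then show ?thesis by (simp add: op_closure_def restrict_T_op_f_eq)
qed

lemma orthogonal_op_range_S_zero:
  assumes "\<And>x z. (x, z) \<in> S \<Longrightarrow> cinner z h = 0"
  shows "h = 0"
proof -
  have "(h, 0) \<in> adjoint S" using assms by (simp add: adjoint_iff)
  then have "(h, 0) \<in> S" using adjoint_S by simp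
  then show ?thesis by (rule S_injective)
qed

lemma dense_op_range_S: "dense_set (op_range S)"
proof (rule dense_if_orthogonal_complement_zero[OF csubspace_op_range[OF is_operator_S]])
  fix h assume "\<And>m. m \<in> op_range S \<Longrightarrow> cinner m h = 0"
  then show "h = 0" by (intro orthogonal_op_range_S_zero) (auto simp: op_range_iff)
qed

lemma orthonormal_basis_f: "orthonormal_basis f"
  unfolding orthonormal_basis_def
proof
  show "\<forall>n m. cinner (f n) (f m) = (if n = m then 1 else 0)"
    using orthonormal_f by (simp add: orthonormal_def)
  show "dense_set (cspan (range f))"
  proof (rule dense_if_orthogonal_complement_zero[OF csubspace_cspan])
    fix h assume "\<And>m. m \<in> cspan (range f) \<Longrightarrow> cinner m h = 0"
    then have fh: "cinner (f n) h = 0" for n using cspan_superset by blast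
    have Dz: "cinner z h = 0" if "x \<in> D" "(x, z) \<in> S" for x z
    proof -
      have "(\<lambda>n. cinner (cinner x (\<phi> n) *\<^sub>C f n) h) sums cinner z h"
        by (rule sums_cinner_left[OF S_sums[OF that]])
      then have "(\<lambda>n. 0) sums cinner z h" by (simp add: cinner_scaleC_left fh)
      then show ?thesis using sums_unique2[OF _ sums_zero] by blast
    qed
    show "h = 0"
    proof (rule orthogonal_op_range_S_zero)
      fix x z assume "(x, z) \<in> S"
      then obtain g where g: "\<And>k. fst (g k) \<in> D \<and> g k \<in> S" "g \<longlonglongrightarrow> (x, z)" using S_core by blast
      have "(\<lambda>k. cinner (snd (g k)) h) \<longlonglongrightarrow> cinner z h"
        using tendsto_snd[OF g(2)] by (intro tendsto_intros) simp
      moreover have "cinner (snd (g k)) h = 0" for k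
        using Dz[of "fst (g k)" "snd (g k)"] g(1)[of k] by simp
      ultimately show "cinner z h = 0" by (simp add: LIMSEQ_const_iff)
    qed
  qed
qed

lemma f_phi_S: "(f n, \<phi> n) \<in> S"
proof -
  have "cinner w (f n) = cinner x (\<phi> n)" if "(x, w) \<in> S" for x w
    by (rule cinner_S_f_coeff[OF that])
  then have "(f n, \<phi> n) \<in> adjoint S" by (simp add: adjoint_iff)
  then show ?thesis using adjoint_S by simp
qed

lemma constructing_pair_phi: "constructing_pair \<phi> f S"
  unfolding constructing_pair_def
proof (intro conjI allI)
  show "orthonormal_basis f" by (rule orthonormal_basis_f)
  show "closed_operator S" using is_operator_S closed_S by (simp add: closed_operator_def)
  show "densely_defined S" by (rule densely_defined_S)
  show "is_operator (op_inverse S)" by (rule is_operator_op_inverse[OF is_operator_S S_injective])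
  show "densely_defined (op_inverse S)"
    using dense_op_range_S by (simp add: densely_defined_def op_dom_op_inverse)
  fix n
  show "f n \<in> op_dom S \<inter> op_dom (adjoint (op_inverse S))"
    using f_phi_S psi_f_S by (auto simp: adjoint_op_inverse adjoint_S op_dom_op_inverse op_dom_iff op_range_iff)
  show "(f n, \<phi> n) \<in> S" by (rule f_phi_S)
qed

lemma constructing_pair_psi: "constructing_pair \<psi> f (op_inverse S)"
  unfolding constructing_pair_def
proof (intro conjI allI)
  show "orthonormal_basis f" by (rule orthonormal_basis_f)
  show "closed_operator (op_inverse S)"
    using is_operator_op_inverse[OF is_operator_S S_injective] closed_op_inverse[OF closed_S]
    by (simp add: closed_operator_def)
  show "densely_defined (op_inverse S)"
    using dense_op_range_S by (simp add: densely_defined_def op_dom_op_inverse)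
  show "is_operator (op_inverse (op_inverse S))" using is_operator_S by simp
  show "densely_defined (op_inverse (op_inverse S))" using densely_defined_S by simp
  fix n
  show "f n \<in> op_dom (op_inverse S) \<inter> op_dom (adjoint (op_inverse (op_inverse S)))"
    using f_phi_S psi_f_S by (auto simp: adjoint_S op_dom_op_inverse op_dom_iff op_range_iff)
  show "(f n, \<psi> n) \<in> op_inverse S" using psi_f_S by simp
qed

end

theorem proposition4p4:
  fixes \<phi> \<psi> :: "nat \<Rightarrow> 'a::{chilbert_space, second_countable_topology}"
    and D E :: "'a set"
  assumes "biorthogonal \<phi> \<psi>"
    and "csubspace D" and "dense_set D"
    and "csubspace E" and "dense_set E"
    and "quasi_basis \<phi> \<psi> D E"
    and "cspan (range \<psi>) \<subseteq> D" and "D \<subseteq> seq_domain \<phi>"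
    and "cspan (range \<phi>) \<subseteq> E" and "E \<subseteq> seq_domain \<psi>"
  shows "\<exists>f. orthonormal_basis f \<and>
           self_adjoint (op_closure (op_restrict (T_op f \<phi>) D)) \<and>
           positive_op (op_closure (op_restrict (T_op f \<phi>) D)) \<and>
           constructing_pair \<phi> f (op_closure (op_restrict (T_op f \<phi>) D)) \<and>
           generalized_riesz_system \<phi> \<and>
           constructing_pair \<psi> f (op_inverse (op_closure (op_restrict (T_op f \<phi>) D))) \<and>
           generalized_riesz_system \<psi>"
proof -
  \<comment> \<open>\<open>E\<close> need not be a subspace, nor contain the \<open>\<phi>\<^sub>n\<close>.\<close>
  have "\<And>m. \<psi> m \<in> D" using assms(7) cspan_superset by blast
  then interpret quasi_basis_setting \<phi> \<psi> D E using assms by unfold_locales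
  have "orthonormal_basis f \<and> self_adjoint S \<and> positive_op S \<and> constructing_pair \<phi> f S
      \<and> generalized_riesz_system \<phi> \<and> constructing_pair \<psi> f (op_inverse S) \<and> generalized_riesz_system \<psi>"
    unfolding generalized_riesz_system_def
    using orthonormal_basis_f self_adjoint_S positive_S constructing_pair_phi constructing_pair_psi
    by blast
  then show ?thesis unfolding closure_restrict_T_op_f[symmetric] by blast
qed

end
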